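(* Let $s>\frac{7}{2}+p$ and, for $u\in H^s(\mathbb{R})$, let $A(u)=(a+b)u\partial_x+b\,\Gamma^{-(p+2)}[L\partial_x^2,u]\partial_x$ and $B(u)=\Gamma A(u)\Gamma^{-1}-A(u)$. Then for every $u\in H^s(\mathbb{R})$, $B(u)$ is a bounded linear operator on $H^{s-1}(\mathbb{R})$, the map $B:H^s(\mathbb{R})\to\mathcal{L}(H^{s-1}(\mathbb{R}))$ is uniformly bounded on bounded subsets of $H^s(\mathbb{R})$, and for every $r>0$ there is a constant $\lambda_2$, depending only on $r$, such that $$\|(B(u)-B(v))w\|_{s-1}\le\lambda_2\|u-v\|_s\|w\|_{s-1}$$ for all $u,v\in H^s(\mathbb{R})$ with $\|u\|_s,\|v\|_s\le r$ and all $w\in H^{s-1}(\mathbb{R})$.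
   Context: $a,b>0$ are constants. $L$ is a positive linear differential operator in $x$ (commuting with $\partial_x$) of even order $p\ge0$, so that $1-L\partial_x^2$ is a positive operator of order $p+2$; $\Gamma^\sigma=(1-L\partial_x^2)^{\sigma/(p+2)}$ for real $\sigma$ and $\Gamma=\Gamma^1$, which is an isometric isomorphism $H^s\to H^{s-1}$. $H^s=H^s(\mathbb{R})$ has norm $\|u\|_s=\|\Gamma^s u\|_{L^2}$. $[P,u]w=P(uw)-uPw$ denotes the commutator with multiplication by $u$. $\mathcal{L}(X)$ denotes bounded linear operators on $X$. *)

theory Defs
  imports "HOL-Analysis.Analysis"
begin

text \<open>Everything is formulated on the Fourier side, with the unitary convention
  hat f(xi) = (2 pi)^(-1/2) int e^(-i x xi) f(x) dx.  A (real-valued) function u is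
  represented by its Fourier transform U :: real => complex, which is Hermitian
  symmetric.  Under this convention d/dx is multiplication by i xi and the product
  u w corresponds to (2 pi)^(-1/2) times the convolution of U and W.\<close>

text \<open>The constant-coefficient differential operator L = sum_{k<=p} c k d^k has symbol
  Lsym c p xi = sum_{k<=p} c k (i xi)^k.\<close>
definition Lsym :: "(nat \<Rightarrow> real) \<Rightarrow> nat \<Rightarrow> real \<Rightarrow> complex" where
  "Lsym c p \<xi> = (\<Sum>k\<le>p. complex_of_real (c k) * (\<i> * complex_of_real \<xi>) ^ k)"

text \<open>Symbol of Gamma = (1 - L d^2)^(1/(p+2)).\<close>
definition msym :: "(nat \<Rightarrow> real) \<Rightarrow> nat \<Rightarrow> real \<Rightarrow> real" where
  "msym c p \<xi> = (1 + Re (Lsym c p \<xi>) * \<xi>\<^sup>2) powr (1 / real (p + 2))"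

definition GammaPow :: "(nat \<Rightarrow> real) \<Rightarrow> nat \<Rightarrow> real \<Rightarrow> (real \<Rightarrow> complex) \<Rightarrow> real \<Rightarrow> complex" where
  "GammaPow c p \<sigma> W = (\<lambda>\<xi>. complex_of_real (msym c p \<xi> powr \<sigma>) * W \<xi>)"

definition Dx :: "(real \<Rightarrow> complex) \<Rightarrow> real \<Rightarrow> complex" where
  "Dx W = (\<lambda>\<xi>. \<i> * complex_of_real \<xi> * W \<xi>)"

definition Lop :: "(nat \<Rightarrow> real) \<Rightarrow> nat \<Rightarrow> (real \<Rightarrow> complex) \<Rightarrow> real \<Rightarrow> complex" where
  "Lop c p W = (\<lambda>\<xi>. Lsym c p \<xi> * W \<xi>)"

definition Mult :: "(real \<Rightarrow> complex) \<Rightarrow> (real \<Rightarrow> complex) \<Rightarrow> real \<Rightarrow> complex" where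
  "Mult U W = (\<lambda>\<xi>. complex_of_real (1 / sqrt (2 * pi)) * (LINT \<eta>|lborel. U (\<xi> - \<eta>) * W \<eta>))"

definition Aop :: "real \<Rightarrow> real \<Rightarrow> (nat \<Rightarrow> real) \<Rightarrow> nat \<Rightarrow> (real \<Rightarrow> complex) \<Rightarrow> (real \<Rightarrow> complex) \<Rightarrow> real \<Rightarrow> complex" where
  "Aop a b c p U W = (\<lambda>\<xi>. complex_of_real (a + b) * Mult U (Dx W) \<xi>
      + complex_of_real b * GammaPow c p (- real (p + 2))
          (\<lambda>\<zeta>. Lop c p (Dx (Dx (Mult U (Dx W)))) \<zeta> - Mult U (Lop c p (Dx (Dx (Dx W)))) \<zeta>) \<xi>)"

definition Bop :: "real \<Rightarrow> real \<Rightarrow> (nat \<Rightarrow> real) \<Rightarrow> nat \<Rightarrow> (real \<Rightarrow> complex) \<Rightarrow> (real \<Rightarrow> complex) \<Rightarrow> real \<Rightarrow> complex" where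
  "Bop a b c p U W = (\<lambda>\<xi>. GammaPow c p 1 (Aop a b c p U (GammaPow c p (-1) W)) \<xi> - Aop a b c p U W \<xi>)"

definition Hs :: "(nat \<Rightarrow> real) \<Rightarrow> nat \<Rightarrow> real \<Rightarrow> (real \<Rightarrow> complex) set" where
  "Hs c p \<sigma> = {U. U \<in> borel_measurable lborel
      \<and> integrable lborel (\<lambda>\<xi>. (msym c p \<xi> powr \<sigma> * cmod (U \<xi>))\<^sup>2)
      \<and> (\<forall>\<xi>. U (- \<xi>) = cnj (U \<xi>))}"

definition hnorm :: "(nat \<Rightarrow> real) \<Rightarrow> nat \<Rightarrow> real \<Rightarrow> (real \<Rightarrow> complex) \<Rightarrow> real" where
  "hnorm c p \<sigma> U = sqrt (LINT \<xi>|lborel. (msym c p \<xi> powr \<sigma> * cmod (U \<xi>))\<^sup>2)"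

end

theory Submission
  imports Defs
begin

text \<open>
  On the Fourier side \<open>\<Gamma>\<close> is multiplication by the symbol \<open>m\<close>, and \<open>psym = m\<^sup>p\<^sup>+\<^sup>2\<close> is the
  symbol of \<open>1 - L \<partial>\<^sup>2\<close>. Since \<open>L \<partial>\<^sup>2\<close> has symbol \<open>1 - psym\<close>, the operator \<open>A(u)\<close> is the
  convolution operator \<open>W \<mapsto> \<kappa> \<integral> U(\<xi> - \<eta>) i\<eta> W(\<eta>) (a + b psym(\<eta>) / psym(\<xi>)) d\<eta>\<close>, so \<open>B(u)\<close>
  has the kernel \<open>U(\<xi> - \<eta>) k(\<xi>, \<eta>)\<close> with \<open>k(\<xi>, \<eta>) = i\<eta> (a + b psym(\<eta>) / psym(\<xi>)) (m(\<xi>) / m(\<eta>) - 1)\<close>.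
  As \<open>m\<close> is Lipschitz and \<open>|\<eta>| \<le> K m(\<eta>)\<close>, the factor \<open>m(\<xi>) - m(\<eta>)\<close> costs one power of
  \<open>m(\<xi> - \<eta>)\<close>, and
  \<open>m(\<xi>)\<^sup>s\<^sup>-\<^sup>1 |k(\<xi>, \<eta>)| \<le> C (m(\<xi> - \<eta>) m(\<eta>)\<^sup>s\<^sup>-\<^sup>1 + m(\<xi> - \<eta>)\<^sup>s m(\<eta>)\<^sup>p\<^sup>+\<^sup>2)\<close>.
  Young's inequality \<open>L\<^sup>1 * L\<^sup>2 \<subseteq> L\<^sup>2\<close>, with the \<open>L\<^sup>1\<close> factor controlled by Cauchy--Schwarz against
  \<open>m\<^sup>-\<^sup>t \<in> L\<^sup>2\<close> for \<open>t > 1/2\<close>, bounds both terms by \<open>\<parallel>u\<parallel>\<^sub>s \<parallel>w\<parallel>\<^sub>s\<^sub>-\<^sub>1\<close>; for the second term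
  \<open>t = s - p - 3\<close>, which is where \<open>s > 7/2 + p\<close> enters. Since \<open>B(u)w\<close> is bilinear in \<open>(u, w)\<close>, the
  single estimate \<open>\<parallel>B(u)w\<parallel>\<^sub>s\<^sub>-\<^sub>1 \<le> C \<parallel>u\<parallel>\<^sub>s \<parallel>w\<parallel>\<^sub>s\<^sub>-\<^sub>1\<close> yields all three claims.
\<close>

lemma lower_order_terms_bound:
  fixes q :: "nat \<Rightarrow> real" and x :: real
  assumes x: "1 \<le> \<bar>x\<bar>"
  shows "\<bar>\<Sum>k<p. q k * x ^ k\<bar> * \<bar>x\<bar> \<le> (\<Sum>k<p. \<bar>q k\<bar>) * \<bar>x\<bar> ^ p"
proof -
  have "\<bar>\<Sum>k<p. q k * x ^ k\<bar> * \<bar>x\<bar> \<le> (\<Sum>k<p. \<bar>q k\<bar> * \<bar>x\<bar> ^ k) * \<bar>x\<bar>"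
    by (intro mult_right_mono order.trans[OF sum_abs]) (auto simp: abs_mult power_abs)
  also have "\<dots> = (\<Sum>k<p. \<bar>q k\<bar> * \<bar>x\<bar> ^ Suc k)"
    by (simp add: sum_distrib_left sum_distrib_right ac_simps)
  also have "\<dots> \<le> (\<Sum>k<p. \<bar>q k\<bar> * \<bar>x\<bar> ^ p)"
    by (intro sum_mono mult_left_mono power_increasing) (use x in auto)
  finally show ?thesis by (simp add: sum_distrib_right)
qed

lemma poly_times_abs_split:
  fixes q :: "nat \<Rightarrow> real" and x :: real
  assumes "x ^ p = \<bar>x\<bar> ^ p"
  shows "(\<Sum>k\<le>p. q k * x ^ k) * \<bar>x\<bar> = (\<Sum>k<p. q k * x ^ k) * \<bar>x\<bar> + q p * \<bar>x\<bar> ^ Suc p"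
  using assms by (simp add: lessThan_Suc_atMost[symmetric] algebra_simps)

lemma nonneg_poly_leading_coeff_pos:
  fixes q :: "nat \<Rightarrow> real"
  assumes qp: "q p \<noteq> 0" and nonneg: "\<And>x. 0 \<le> (\<Sum>k\<le>p. q k * x ^ k)"
  shows "q p > 0"
proof (rule ccontr)
  assume "\<not> q p > 0"
  with qp have neg: "q p < 0" by auto
  define D where "D = (\<Sum>k<p. \<bar>q k\<bar>)"
  define x where "x = 1 + D / (- q p)"
  have "D \<ge> 0" by (simp add: D_def sum_nonneg)
  then have "1 \<le> x" and D_less: "D + q p * x < 0"
    using neg by (auto simp: x_def field_simps)
  then have x1: "1 \<le> \<bar>x\<bar>" and x_abs: "\<bar>x\<bar> = x" by auto
  have "(\<Sum>k\<le>p. q k * x ^ k) * \<bar>x\<bar> = (\<Sum>k<p. q k * x ^ k) * \<bar>x\<bar> + q p * \<bar>x\<bar> ^ Suc p"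
    using x_abs by (intro poly_times_abs_split) simp
  also have "\<dots> \<le> \<bar>\<Sum>k<p. q k * x ^ k\<bar> * \<bar>x\<bar> + q p * \<bar>x\<bar> ^ Suc p"
    by (intro add_right_mono mult_right_mono) auto
  also have "\<dots> \<le> \<bar>x\<bar> ^ p * (D + q p * x)"
    using lower_order_terms_bound[OF x1, where q=q and p=p] x_abs by (simp add: D_def algebra_simps)
  also have "\<dots> < 0"
    using x1 D_less by (intro mult_pos_neg) auto
  finally show False
    using nonneg[of x] by (metis abs_ge_zero mult_nonneg_nonneg not_le)
qed

lemma nonneg_poly_lower_bound:
  fixes q :: "nat \<Rightarrow> real"
  assumes "even p" and qp: "q p \<noteq> 0" and nonneg: "\<And>x. 0 \<le> (\<Sum>k\<le>p. q k * x ^ k)"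
  shows "\<exists>\<delta>>0. \<exists>R\<ge>1. \<forall>x. R \<le> \<bar>x\<bar> \<longrightarrow> \<delta> * \<bar>x\<bar> ^ p \<le> (\<Sum>k\<le>p. q k * x ^ k)"
proof -
  have pos: "q p > 0" using nonneg_poly_leading_coeff_pos[OF qp nonneg] .
  define D where "D = (\<Sum>k<p. \<bar>q k\<bar>)"
  define R where "R = max 1 (2 * D / q p)"
  have "q p / 2 * \<bar>x\<bar> ^ p \<le> (\<Sum>k\<le>p. q k * x ^ k)" if xR: "R \<le> \<bar>x\<bar>" for x
  proof -
    have x1: "1 \<le> \<bar>x\<bar>" and xD: "2 * D \<le> q p * \<bar>x\<bar>"
      using xR pos by (auto simp: R_def field_simps)
    have "q p / 2 * \<bar>x\<bar> ^ p * \<bar>x\<bar> \<le> q p * \<bar>x\<bar> ^ Suc p - D * \<bar>x\<bar> ^ p"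
      using mult_right_mono[OF xD, of "\<bar>x\<bar> ^ p"] by (simp add: algebra_simps)
    also have "\<dots> \<le> q p * \<bar>x\<bar> ^ Suc p - \<bar>\<Sum>k<p. q k * x ^ k\<bar> * \<bar>x\<bar>"
      using lower_order_terms_bound[OF x1] by (simp add: D_def)
    also have "\<dots> \<le> (\<Sum>k<p. q k * x ^ k) * \<bar>x\<bar> + q p * \<bar>x\<bar> ^ Suc p"
      using mult_right_mono[of "- \<bar>\<Sum>k<p. q k * x ^ k\<bar>" "\<Sum>k<p. q k * x ^ k" "\<bar>x\<bar>"] by simp
    also have "\<dots> = (\<Sum>k\<le>p. q k * x ^ k) * \<bar>x\<bar>"
      using \<open>even p\<close> by (intro poly_times_abs_split[symmetric]) (simp add: power_even_abs)
    finally have "q p / 2 * \<bar>x\<bar> ^ p * \<bar>x\<bar> \<le> (\<Sum>k\<le>p. q k * x ^ k) * \<bar>x\<bar>" .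
    then show ?thesis
      using x1 by (metis mult_right_le_imp_le abs_ge_zero antisym_conv2 not_one_le_zero)
  qed
  then show ?thesis
    using pos by (intro exI[of _ "q p / 2"] conjI exI[of _ R]) (auto simp: R_def)
qed

lemma abs_power_diff_le:
  fixes x y :: real
  shows "\<bar>x ^ j - y ^ j\<bar> \<le> real j * \<bar>x - y\<bar> * max \<bar>x\<bar> \<bar>y\<bar> ^ (j - 1)"
proof -
  define M where "M = max \<bar>x\<bar> \<bar>y\<bar>"
  have "\<bar>y ^ (j - Suc i) * x ^ i\<bar> \<le> M ^ (j - 1)" if "i < j" for i
  proof -
    have "\<bar>y ^ (j - Suc i) * x ^ i\<bar> \<le> M ^ (j - Suc i) * M ^ i"
      unfolding abs_mult power_abs by (intro mult_mono power_mono) (auto simp: M_def)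
    also have "\<dots> = M ^ (j - 1)" using that by (simp add: power_add[symmetric])
    finally show ?thesis .
  qed
  then have "\<bar>\<Sum>i<j. y ^ (j - Suc i) * x ^ i\<bar> \<le> real j * M ^ (j - 1)"
    using order.trans[OF sum_abs sum_mono[of "{..<j}" _ "\<lambda>_. M ^ (j - 1)"]] by simp
  then have "\<bar>x - y\<bar> * \<bar>\<Sum>i<j. y ^ (j - Suc i) * x ^ i\<bar> \<le> \<bar>x - y\<bar> * (real j * M ^ (j - 1))"
    by (rule mult_left_mono) simp
  then show ?thesis
    unfolding power_diff_sumr2[of x j y] abs_mult M_def by (simp add: ac_simps)
qed

lemma power_diff_ge:
  fixes x y :: real
  assumes "0 \<le> y" "y \<le> x" "1 \<le> j"
  shows "(x - y) * x ^ (j - 1) \<le> x ^ j - y ^ j"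
proof -
  have "y ^ (j - Suc (j - 1)) * x ^ (j - 1) \<le> (\<Sum>i<j. y ^ (j - Suc i) * x ^ i)"
    by (rule member_le_sum) (use assms in auto)
  then show ?thesis
    unfolding power_diff_sumr2[of x j y] using assms by (simp add: mult_left_mono)
qed

lemma powr_le_sum_powr:
  fixes x y z B \<alpha> :: real
  assumes "0 < x" "0 < y" "0 < z" "0 \<le> \<alpha>" "0 < B" "x \<le> B * (y + z)"
  shows "x powr \<alpha> \<le> (2 * B) powr \<alpha> * (y powr \<alpha> + z powr \<alpha>)"
proof -
  have "B * (y + z) \<le> B * (2 * max y z)"
    using assms by (intro mult_left_mono) auto
  then have "x \<le> (2 * B) * max y z"
    using assms(6) by simp
  then have "x powr \<alpha> \<le> ((2 * B) * max y z) powr \<alpha>"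
    using assms by (intro powr_mono2) auto
  also have "\<dots> = (2 * B) powr \<alpha> * max y z powr \<alpha>"
    using assms by (auto intro!: powr_mult simp: max_def)
  also have "\<dots> \<le> (2 * B) powr \<alpha> * (y powr \<alpha> + z powr \<alpha>)"
    by (intro mult_left_mono) (auto simp: max_def)
  finally show ?thesis .
qed

lemma powr_weight_ratio_bound:
  fixes x y z a b B \<sigma> :: real and n :: nat
  assumes x: "0 < x" and y: "1 \<le> y" and z: "1 \<le> z" and ab: "0 \<le> a" "0 \<le> b"
    and B: "1 \<le> B" and \<sigma>: "real n \<le> \<sigma>" and xB: "x \<le> B * (y + z)"
  shows "x powr \<sigma> * (a + b * y ^ n / x ^ n)
    \<le> (a * (2 * B) powr \<sigma> + b * (2 * B) powr (\<sigma> - n)) * (y powr \<sigma> + z powr \<sigma> * y ^ n)"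
proof -
  have "x powr \<sigma> / x ^ n = x powr (\<sigma> - n)"
    by (simp add: powr_diff powr_realpow x)
  then have split: "x powr \<sigma> * (a + b * y ^ n / x ^ n) = a * x powr \<sigma> + b * (y ^ n * x powr (\<sigma> - n))"
    by (simp add: distrib_left) (metis times_divide_eq_right mult.commute mult.left_commute)
  have "x powr \<sigma> \<le> (2 * B) powr \<sigma> * (y powr \<sigma> + z powr \<sigma>)"
    using x y z B \<sigma> xB by (intro powr_le_sum_powr) auto
  also have "\<dots> \<le> (2 * B) powr \<sigma> * (y powr \<sigma> + z powr \<sigma> * y ^ n)"
    using y mult_left_mono[of 1 "y ^ n" "z powr \<sigma>"] by (intro mult_left_mono add_left_mono) (auto simp: one_le_power)
  finally have first: "x powr \<sigma> \<le> (2 * B) powr \<sigma> * (y powr \<sigma> + z powr \<sigma> * y ^ n)" .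
  have "x powr (\<sigma> - n) \<le> (2 * B) powr (\<sigma> - n) * (y powr (\<sigma> - n) + z powr (\<sigma> - n))"
    using x y z B \<sigma> xB by (intro powr_le_sum_powr) auto
  also have "\<dots> \<le> (2 * B) powr (\<sigma> - n) * (y powr (\<sigma> - n) + z powr \<sigma>)"
    using z by (intro mult_left_mono add_left_mono powr_mono) auto
  finally have "y ^ n * x powr (\<sigma> - n) \<le> y ^ n * ((2 * B) powr (\<sigma> - n) * (y powr (\<sigma> - n) + z powr \<sigma>))"
    using y by (intro mult_left_mono) auto
  also have "\<dots> = (2 * B) powr (\<sigma> - n) * (y ^ n * y powr (\<sigma> - n) + z powr \<sigma> * y ^ n)"
    by (simp add: algebra_simps)
  also have "y ^ n * y powr (\<sigma> - n) = y powr \<sigma>"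
    using y by (simp add: powr_realpow[symmetric] powr_add[symmetric])
  finally have second: "y ^ n * x powr (\<sigma> - n) \<le> (2 * B) powr (\<sigma> - n) * (y powr \<sigma> + z powr \<sigma> * y ^ n)" .
  have "a * x powr \<sigma> + b * (y ^ n * x powr (\<sigma> - n))
    \<le> a * ((2 * B) powr \<sigma> * (y powr \<sigma> + z powr \<sigma> * y ^ n))
      + b * ((2 * B) powr (\<sigma> - n) * (y powr \<sigma> + z powr \<sigma> * y ^ n))"
    by (rule add_mono[OF mult_left_mono[OF first ab(1)] mult_left_mono[OF second ab(2)]])
  then show ?thesis
    unfolding split by (simp only: distrib_right mult.assoc)
qed

section \<open>Convolutions of nonnegative functions\<close>

lemma integrable_one_plus_abs_powr:
  fixes q :: real
  assumes q: "q > 1"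
  shows "integrable lborel (\<lambda>x. (1 + \<bar>x\<bar>) powr (- q))"
proof (rule integrableI_nonneg)
  define f where "f x = (if x \<in> {1..} then x powr (- q) else 0)" for x :: real
  have f_meas[measurable]: "f \<in> borel_measurable borel" unfolding f_def by measurable
  have "(f has_integral - (1 powr (- q + 1)) / (- q + 1)) UNIV"
    using has_integral_powr_to_inf[of "- q" 1] q unfolding f_def
    by (subst has_integral_restrict_UNIV) auto
  then have f_finite: "(\<integral>\<^sup>+x. ennreal (f x) \<partial>lborel) < \<infinity>"
    by (subst nn_integral_has_integral_lborel[OF f_meas]) (auto simp: f_def)
  have "(\<integral>\<^sup>+x. ennreal ((1 + \<bar>x\<bar>) powr (- q)) \<partial>lborel)
      \<le> (\<integral>\<^sup>+x. ennreal (f (1 + 1 * x)) + ennreal (f (1 + (-1) * x)) \<partial>lborel)"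
    by (intro nn_integral_mono) (auto simp: f_def add_increasing add_increasing2)
  also have "\<dots> = (\<integral>\<^sup>+x. ennreal (f (1 + 1 * x)) \<partial>lborel) + (\<integral>\<^sup>+x. ennreal (f (1 + (-1) * x)) \<partial>lborel)"
    by (rule nn_integral_add) auto
  also have "\<dots> = 2 * (\<integral>\<^sup>+x. ennreal (f x) \<partial>lborel)"
    using nn_integral_real_affine[of "\<lambda>x. ennreal (f x)" 1 1]
      nn_integral_real_affine[of "\<lambda>x. ennreal (f x)" "-1" 1] by (simp add: mult_2)
  finally show "(\<integral>\<^sup>+x. ennreal ((1 + \<bar>x\<bar>) powr (- q)) \<partial>lborel) < \<infinity>"
    using f_finite by (simp add: ennreal_mult_less_top le_less_trans)
qed auto

lemma integrable_mult_of_square_integrable: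
  fixes f g :: "real \<Rightarrow> real"
  assumes [measurable]: "f \<in> borel_measurable borel" "g \<in> borel_measurable borel"
    and "integrable lborel (\<lambda>x. (f x)\<^sup>2)" "integrable lborel (\<lambda>x. (g x)\<^sup>2)"
  shows "integrable lborel (\<lambda>x. f x * g x)"
proof (rule Bochner_Integration.integrable_bound)
  show "integrable lborel (\<lambda>x. (f x)\<^sup>2 + (g x)\<^sup>2)" using assms by auto
  show "AE x in lborel. norm (f x * g x) \<le> norm ((f x)\<^sup>2 + (g x)\<^sup>2)"
  proof (rule AE_I2)
    fix x
    have "2 * \<bar>f x\<bar> * \<bar>g x\<bar> \<le> (f x)\<^sup>2 + (g x)\<^sup>2"
      using sum_squares_bound[of "\<bar>f x\<bar>" "\<bar>g x\<bar>"] by simp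
    moreover have "0 \<le> \<bar>f x\<bar> * \<bar>g x\<bar>" by simp
    moreover have "norm (f x * g x) = \<bar>f x\<bar> * \<bar>g x\<bar>" by (simp add: abs_mult)
    moreover have "norm ((f x)\<^sup>2 + (g x)\<^sup>2) = (f x)\<^sup>2 + (g x)\<^sup>2" by simp
    ultimately show "norm (f x * g x) \<le> norm ((f x)\<^sup>2 + (g x)\<^sup>2)" by linarith
  qed
qed measurable

lemma Cauchy_Schwarz_nn_integral_real:
  fixes f g :: "real \<Rightarrow> real"
  assumes [measurable]: "f \<in> borel_measurable borel" "g \<in> borel_measurable borel"
    and "\<And>x. 0 \<le> f x" "\<And>x. 0 \<le> g x"
  shows "(\<integral>\<^sup>+x. ennreal (f x * g x) \<partial>lborel)\<^sup>2
    \<le> (\<integral>\<^sup>+x. ennreal ((f x)\<^sup>2) \<partial>lborel) * (\<integral>\<^sup>+x. ennreal ((g x)\<^sup>2) \<partial>lborel)"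
  using Cauchy_Schwarz_nn_integral[of "\<lambda>x. ennreal (f x)" lborel "\<lambda>x. ennreal (g x)"] assms
  by (simp add: ennreal_mult ennreal_power)

lemma ennreal_add_square_le:
  fixes x y :: ennreal
  shows "(x + y)\<^sup>2 \<le> 2 * (x\<^sup>2 + y\<^sup>2)"
proof -
  have "(x + y)\<^sup>2 = x\<^sup>2 + y\<^sup>2 + 2 * x * y"
    unfolding power2_eq_square mult_2 by (simp only: distrib_left distrib_right add_ac mult_ac)
  also have "\<dots> \<le> x\<^sup>2 + y\<^sup>2 + (x\<^sup>2 + y\<^sup>2)"
    by (intro add_left_mono sum_of_squares_ge_ennreal)
  finally show ?thesis by (simp only: mult_2)
qed

definition nn_convolution :: "(real \<Rightarrow> real) \<Rightarrow> (real \<Rightarrow> real) \<Rightarrow> real \<Rightarrow> ennreal" where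
  "nn_convolution F G \<xi> = (\<integral>\<^sup>+\<eta>. ennreal (F (\<xi> - \<eta>) * G \<eta>) \<partial>lborel)"

lemma borel_measurable_nn_convolution:
  assumes [measurable]: "F \<in> borel_measurable borel" "G \<in> borel_measurable borel"
  shows "nn_convolution F G \<in> borel_measurable borel"
  unfolding nn_convolution_def by measurable

lemma nn_convolution_commute:
  assumes [measurable]: "F \<in> borel_measurable borel" "G \<in> borel_measurable borel"
  shows "nn_convolution F G \<xi> = nn_convolution G F \<xi>"
  using nn_integral_real_affine[of "\<lambda>\<eta>. ennreal (F (\<xi> - \<eta>) * G \<eta>)" "-1" \<xi>]
  by (simp add: nn_convolution_def mult.commute)

lemma young_nn_convolution_L2_L1:
  fixes F G :: "real \<Rightarrow> real"
  assumes [measurable]: "F \<in> borel_measurable borel" "G \<in> borel_measurable borel"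
    and F0: "\<And>x. 0 \<le> F x" and G0: "\<And>x. 0 \<le> G x"
  shows "(\<integral>\<^sup>+\<xi>. (nn_convolution F G \<xi>)\<^sup>2 \<partial>lborel)
    \<le> (\<integral>\<^sup>+x. ennreal (G x) \<partial>lborel)\<^sup>2 * (\<integral>\<^sup>+x. ennreal ((F x)\<^sup>2) \<partial>lborel)"
proof -
  let ?G = "\<integral>\<^sup>+x. ennreal (G x) \<partial>lborel" and ?F2 = "\<integral>\<^sup>+x. ennreal ((F x)\<^sup>2) \<partial>lborel"
  have "(nn_convolution F G \<xi>)\<^sup>2
      \<le> (\<integral>\<^sup>+\<eta>. ennreal ((F (\<xi> - \<eta>))\<^sup>2 * G \<eta>) \<partial>lborel) * ?G" for \<xi>
    \<comment> \<open>Cauchy--Schwarz after splitting \<open>G = sqrt G * sqrt G\<close>\<close>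
    using Cauchy_Schwarz_nn_integral_real[of "\<lambda>\<eta>. F (\<xi> - \<eta>) * sqrt (G \<eta>)" "\<lambda>\<eta>. sqrt (G \<eta>)"] F0 G0
    by (simp add: nn_convolution_def mult.assoc power_mult_distrib)
  then have "(\<integral>\<^sup>+\<xi>. (nn_convolution F G \<xi>)\<^sup>2 \<partial>lborel)
      \<le> (\<integral>\<^sup>+\<xi>. (\<integral>\<^sup>+\<eta>. ennreal ((F (\<xi> - \<eta>))\<^sup>2 * G \<eta>) \<partial>lborel) \<partial>lborel) * ?G"
    by (subst nn_integral_multc[symmetric]) (measurable, intro nn_integral_mono)
  also have "(\<integral>\<^sup>+\<xi>. (\<integral>\<^sup>+\<eta>. ennreal ((F (\<xi> - \<eta>))\<^sup>2 * G \<eta>) \<partial>lborel) \<partial>lborel)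
      = (\<integral>\<^sup>+\<eta>. (\<integral>\<^sup>+\<xi>. ennreal (G \<eta>) * ennreal ((F (\<xi> - \<eta>))\<^sup>2) \<partial>lborel) \<partial>lborel)"
    using G0 by (subst lborel_pair.Fubini') (auto simp: ennreal_mult mult.commute)
  also have "\<dots> = (\<integral>\<^sup>+\<eta>. ennreal (G \<eta>) * ?F2 \<partial>lborel)"
  proof (rule nn_integral_cong)
    fix \<eta> :: real
    have "(\<integral>\<^sup>+\<xi>. ennreal ((F (\<xi> - \<eta>))\<^sup>2) \<partial>lborel) = ?F2"
      using nn_integral_real_affine[of "\<lambda>x. ennreal ((F x)\<^sup>2)" 1 "- \<eta>"] by simp
    then show "(\<integral>\<^sup>+\<xi>. ennreal (G \<eta>) * ennreal ((F (\<xi> - \<eta>))\<^sup>2) \<partial>lborel) = ennreal (G \<eta>) * ?F2"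
      by (subst nn_integral_cmult) auto
  qed
  also have "\<dots> = ?G * ?F2"
    by (rule nn_integral_multc) measurable
  finally show ?thesis by (simp add: power2_eq_square mult_ac)
qed

lemma young_nn_convolution_L1_L2:
  fixes F G :: "real \<Rightarrow> real"
  assumes [measurable]: "F \<in> borel_measurable borel" "G \<in> borel_measurable borel"
    and "\<And>x. 0 \<le> F x" "\<And>x. 0 \<le> G x"
  shows "(\<integral>\<^sup>+\<xi>. (nn_convolution F G \<xi>)\<^sup>2 \<partial>lborel)
    \<le> (\<integral>\<^sup>+x. ennreal (F x) \<partial>lborel)\<^sup>2 * (\<integral>\<^sup>+x. ennreal ((G x)\<^sup>2) \<partial>lborel)"
  using young_nn_convolution_L2_L1[of G F] assms by (simp add: nn_convolution_commute)

section \<open>The symbol of \<open>\<Gamma>\<close>\<close>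

locale symbol_setting =
  fixes c :: "nat \<Rightarrow> real" and p :: nat
  assumes even_p: "even p" and leading_coeff: "c p \<noteq> 0"
    and Lsym_real_nonneg: "\<forall>\<xi>. Lsym c p \<xi> \<in> \<real> \<and> 0 \<le> Re (Lsym c p \<xi>)"
begin

abbreviation m :: "real \<Rightarrow> real" where "m \<equiv> msym c p"

definition lsym :: "real \<Rightarrow> real" where "lsym \<xi> = Re (Lsym c p \<xi>)"

text \<open>The symbol of \<open>1 - L \<partial>\<^sup>2 = \<Gamma>\<^sup>p\<^sup>+\<^sup>2\<close>.\<close>
definition psym :: "real \<Rightarrow> real" where "psym \<xi> = 1 + lsym \<xi> * \<xi>\<^sup>2"

lemma lsym_nonneg: "0 \<le> lsym \<xi>"
  using Lsym_real_nonneg by (simp add: lsym_def)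

lemma Lsym_eq_lsym: "Lsym c p \<xi> = complex_of_real (lsym \<xi>)"
  using Lsym_real_nonneg by (simp add: lsym_def)

lemma psym_ge_1: "1 \<le> psym \<xi>"
  using lsym_nonneg[of \<xi>] by (simp add: psym_def)

lemma psym_pos: "0 < psym \<xi>"
  using psym_ge_1[of \<xi>] by simp

lemma msym_eq: "m \<xi> = psym \<xi> powr (1 / real (p + 2))"
  by (simp add: msym_def psym_def lsym_def)

lemma msym_ge_1: "1 \<le> m \<xi>"
  using psym_ge_1[of \<xi>] by (simp add: msym_eq ge_one_powr_ge_zero)

lemma msym_pos: "0 < m \<xi>"
  using msym_ge_1[of \<xi>] by simp

lemma msym_neq_0 [simp]: "m \<xi> \<noteq> 0"
  using msym_pos[of \<xi>] by simp

lemma msym_power: "m \<xi> ^ (p + 2) = psym \<xi>"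
proof -
  have "m \<xi> ^ (p + 2) = m \<xi> powr real (p + 2)"
    using msym_pos[of \<xi>] by (rule powr_realpow[symmetric])
  also have "\<dots> = psym \<xi>"
    using psym_pos[of \<xi>] by (simp add: msym_eq powr_powr)
  finally show ?thesis .
qed

lemma msym_powr_neg: "m \<xi> powr (- real (p + 2)) = 1 / psym \<xi>"
proof -
  have "(1 / real (p + 2)) * (- real (p + 2)) = -1" by (simp add: field_simps)
  then show ?thesis
    using psym_pos[of \<xi>] unfolding msym_eq powr_powr by (simp add: powr_neg_one)
qed

lemma Lsym_minus: "Lsym c p (- \<xi>) = cnj (Lsym c p \<xi>)"
  by (simp add: Lsym_def)

lemma psym_minus: "psym (- \<xi>) = psym \<xi>"
  by (simp add: psym_def lsym_def Lsym_minus)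

lemma msym_minus: "m (- \<xi>) = m \<xi>"
  by (simp add: msym_eq psym_minus)

lemma continuous_on_Lsym: "continuous_on UNIV (Lsym c p)"
  unfolding Lsym_def by (intro continuous_intros)

lemma continuous_on_psym: "continuous_on UNIV psym"
  unfolding psym_def lsym_def
  by (intro continuous_intros continuous_on_compose2[OF continuous_on_Re continuous_on_Lsym]) auto

lemma continuous_on_msym: "continuous_on UNIV m"
  unfolding msym_eq[abs_def] using psym_pos
  by (intro continuous_intros continuous_on_psym) (auto simp: less_imp_neq[symmetric])

lemma borel_measurable_Lsym[measurable]: "Lsym c p \<in> borel_measurable borel"
  by (rule borel_measurable_continuous_onI[OF continuous_on_Lsym])

lemma borel_measurable_psym[measurable]: "psym \<in> borel_measurable borel"
  by (rule borel_measurable_continuous_onI[OF continuous_on_psym])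

lemma borel_measurable_msym[measurable]: "m \<in> borel_measurable borel"
  by (rule borel_measurable_continuous_onI[OF continuous_on_msym])

definition lcoeff :: "nat \<Rightarrow> real" where "lcoeff k = c k * Re (\<i> ^ k)"

lemma lsym_poly: "lsym \<xi> = (\<Sum>k\<le>p. lcoeff k * \<xi> ^ k)"
proof -
  have "(\<i> * complex_of_real \<xi>) ^ k = \<i> ^ k * complex_of_real (\<xi> ^ k)" for k
    by (simp add: power_mult_distrib)
  then show ?thesis by (simp add: lsym_def Lsym_def lcoeff_def Re_sum mult.assoc)
qed

lemma lcoeff_leading: "lcoeff p \<noteq> 0"
proof -
  have "\<i> ^ p = (\<i>\<^sup>2) ^ (p div 2)" using even_p by (simp add: power_mult[symmetric])
  then have "Re (\<i> ^ p) = (-1) ^ (p div 2)" by simp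
  then show ?thesis using leading_coeff by (simp add: lcoeff_def)
qed

lemma psym_poly: "psym \<xi> = 1 + (\<Sum>k\<le>p. lcoeff k * \<xi> ^ (k + 2))"
  unfolding psym_def lsym_poly sum_distrib_right
  by (intro arg_cong[where f="\<lambda>x. 1 + x"] sum.cong) (auto simp: power_add power2_eq_square)

lemma abs_le_msym: "\<exists>K>0. \<forall>\<xi>. \<bar>\<xi>\<bar> \<le> K * m \<xi>"
proof -
  obtain \<delta> R where \<delta>: "\<delta> > 0" and R: "R \<ge> 1"
    and lsym_ge: "\<And>x. R \<le> \<bar>x\<bar> \<Longrightarrow> \<delta> * \<bar>x\<bar> ^ p \<le> lsym x"
    using nonneg_poly_lower_bound[where p=p and q=lcoeff, OF even_p lcoeff_leading] lsym_nonneg unfolding lsym_poly by blast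
  define d where "d = root (p + 2) \<delta>"
  have d: "d > 0" using \<delta> by (simp add: d_def)
  have d_pow: "d ^ (p + 2) = \<delta>" using \<delta> unfolding d_def by (intro real_root_pow_pos) auto
  define K where "K = max R (1 / d)"
  have "\<bar>\<xi>\<bar> \<le> K * m \<xi>" for \<xi>
  proof (cases "R \<le> \<bar>\<xi>\<bar>")
    case True
    have "(d * \<bar>\<xi>\<bar>) ^ (p + 2) = d ^ (p + 2) * (\<bar>\<xi>\<bar> ^ p * \<xi>\<^sup>2)"
      by (simp add: power_mult_distrib power_add power2_abs power2_eq_square ac_simps)
    also have "\<dots> = (\<delta> * \<bar>\<xi>\<bar> ^ p) * \<xi>\<^sup>2"
      by (simp only: d_pow mult.assoc)
    also have "\<dots> \<le> lsym \<xi> * \<xi>\<^sup>2"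
      by (intro mult_right_mono lsym_ge True) auto
    also have "\<dots> \<le> m \<xi> ^ (p + 2)"
      unfolding msym_power psym_def by simp
    also have "p + 2 = Suc (p + 1)" by simp
    finally have "d * \<bar>\<xi>\<bar> \<le> m \<xi>"
      by (rule power_le_imp_le_base) (use msym_pos[of \<xi>] in auto)
    then have "\<bar>\<xi>\<bar> \<le> (1 / d) * m \<xi>"
      using d by (simp add: field_simps)
    also have "\<dots> \<le> K * m \<xi>"
      using msym_pos[of \<xi>] by (intro mult_right_mono) (auto simp: K_def)
    finally show ?thesis .
  next
    case False
    then have "\<bar>\<xi>\<bar> \<le> R * 1" by simp
    also have "\<dots> \<le> K * m \<xi>"
      using msym_ge_1[of \<xi>] R by (intro mult_mono) (auto simp: K_def)
    finally show ?thesis .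
  qed
  moreover have "K > 0" using R by (simp add: K_def)
  ultimately show ?thesis by blast
qed

lemma psym_diff_bound:
  "\<bar>psym \<xi> - psym \<eta>\<bar>
    \<le> \<bar>\<xi> - \<eta>\<bar> * (\<Sum>k\<le>p. \<bar>lcoeff k\<bar> * real (k + 2)) * (1 + max \<bar>\<xi>\<bar> \<bar>\<eta>\<bar>) ^ (p + 1)"
proof -
  define M where "M = max \<bar>\<xi>\<bar> \<bar>\<eta>\<bar>"
  have pow_diff: "\<bar>\<xi> ^ (k + 2) - \<eta> ^ (k + 2)\<bar> \<le> real (k + 2) * \<bar>\<xi> - \<eta>\<bar> * (1 + M) ^ (p + 1)"
    if "k \<in> {..p}" for k
  proof -
    have "M ^ (k + 2 - 1) \<le> (1 + M) ^ (k + 2 - 1)"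
      by (intro power_mono) (auto simp: M_def)
    also have "\<dots> \<le> (1 + M) ^ (p + 1)"
      using that by (intro power_increasing) (auto simp: M_def)
    finally have "real (k + 2) * \<bar>\<xi> - \<eta>\<bar> * M ^ (k + 2 - 1) \<le> real (k + 2) * \<bar>\<xi> - \<eta>\<bar> * (1 + M) ^ (p + 1)"
      by (intro mult_left_mono) auto
    with abs_power_diff_le[of \<xi> "k + 2" \<eta>] show ?thesis
      unfolding M_def by (rule order_trans)
  qed
  have "psym \<xi> - psym \<eta> = (\<Sum>k\<le>p. lcoeff k * (\<xi> ^ (k + 2) - \<eta> ^ (k + 2)))"
    by (simp add: psym_poly sum_subtractf[symmetric] algebra_simps)
  then have "\<bar>psym \<xi> - psym \<eta>\<bar> \<le> (\<Sum>k\<le>p. \<bar>lcoeff k\<bar> * \<bar>\<xi> ^ (k + 2) - \<eta> ^ (k + 2)\<bar>)"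
    by (simp add: order.trans[OF sum_abs] abs_mult)
  also have "\<dots> \<le> (\<Sum>k\<le>p. \<bar>lcoeff k\<bar> * (real (k + 2) * \<bar>\<xi> - \<eta>\<bar> * (1 + M) ^ (p + 1)))"
    using pow_diff by (intro sum_mono mult_left_mono) auto
  finally show ?thesis
    by (simp add: M_def sum_distrib_left sum_distrib_right ac_simps)
qed

lemma msym_lipschitz: "\<exists>L>0. \<forall>\<xi> \<eta>. \<bar>m \<xi> - m \<eta>\<bar> \<le> L * \<bar>\<xi> - \<eta>\<bar>"
proof -
  obtain K where K: "K > 0" and abs_le: "\<And>\<xi>. \<bar>\<xi>\<bar> \<le> K * m \<xi>" using abs_le_msym by blast
  define E where "E = (\<Sum>k\<le>p. \<bar>lcoeff k\<bar> * real (k + 2))"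
  have E: "E \<ge> 0" unfolding E_def by (intro sum_nonneg) auto
  have le: "m \<xi> - m \<eta> \<le> E * (1 + K) ^ (p + 1) * \<bar>\<xi> - \<eta>\<bar>" if "m \<eta> \<le> m \<xi>" for \<xi> \<eta>
  proof -
    \<comment> \<open>\<open>x\<^sup>p\<^sup>+\<^sup>2 - y\<^sup>p\<^sup>+\<^sup>2 \<ge> (x - y) x\<^sup>p\<^sup>+\<^sup>1\<close> turns the polynomial bound for \<open>psym = m\<^sup>p\<^sup>+\<^sup>2\<close> into one for \<open>m\<close>\<close>
    have "K * m \<eta> \<le> K * m \<xi>" using that K by simp
    then have "max \<bar>\<xi>\<bar> \<bar>\<eta>\<bar> \<le> K * m \<xi>" using abs_le[of \<xi>] abs_le[of \<eta>] by simp
    then have "1 + max \<bar>\<xi>\<bar> \<bar>\<eta>\<bar> \<le> m \<xi> + K * m \<xi>"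
      using msym_ge_1[of \<xi>] by linarith
    then have "1 + max \<bar>\<xi>\<bar> \<bar>\<eta>\<bar> \<le> (1 + K) * m \<xi>"
      by (simp add: distrib_right)
    then have "(1 + max \<bar>\<xi>\<bar> \<bar>\<eta>\<bar>) ^ (p + 1) \<le> ((1 + K) * m \<xi>) ^ (p + 1)"
      by (intro power_mono) auto
    then have "\<bar>\<xi> - \<eta>\<bar> * E * (1 + max \<bar>\<xi>\<bar> \<bar>\<eta>\<bar>) ^ (p + 1) \<le> \<bar>\<xi> - \<eta>\<bar> * E * ((1 + K) * m \<xi>) ^ (p + 1)"
      using E by (intro mult_left_mono) auto
    then have psym_le: "psym \<xi> - psym \<eta> \<le> \<bar>\<xi> - \<eta>\<bar> * E * ((1 + K) * m \<xi>) ^ (p + 1)"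
      using psym_diff_bound[of \<xi> \<eta>] unfolding E_def by linarith
    have "(m \<xi> - m \<eta>) * m \<xi> ^ (p + 1) \<le> m \<xi> ^ (p + 2) - m \<eta> ^ (p + 2)"
      using power_diff_ge[of "m \<eta>" "m \<xi>" "p + 2"] that msym_ge_1[of \<eta>] by simp
    also have "\<dots> = psym \<xi> - psym \<eta>"
      by (simp only: msym_power)
    also have "\<dots> \<le> (\<bar>\<xi> - \<eta>\<bar> * E * (1 + K) ^ (p + 1)) * m \<xi> ^ (p + 1)"
      using psym_le by (simp only: power_mult_distrib mult.assoc)
    finally show ?thesis
      using msym_pos[of \<xi>] by (simp add: mult_ac)
  qed
  have "\<bar>m \<xi> - m \<eta>\<bar> \<le> (E * (1 + K) ^ (p + 1) + 1) * \<bar>\<xi> - \<eta>\<bar>" for \<xi> \<eta>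
    using le[of \<xi> \<eta>] le[of \<eta> \<xi>] by (cases "m \<eta> \<le> m \<xi>") (auto simp: abs_minus_commute algebra_simps)
  moreover have "E * (1 + K) ^ (p + 1) + 1 > 0" using E K by (simp add: add_nonneg_pos)
  ultimately show ?thesis by blast
qed

lemma abs_mult_psym_le: "\<exists>K>0. \<forall>\<eta>. \<bar>\<eta>\<bar> * psym \<eta> \<le> K * m \<eta> ^ (p + 3)"
proof -
  obtain K where K: "K > 0" and abs_le: "\<And>\<eta>. \<bar>\<eta>\<bar> \<le> K * m \<eta>" using abs_le_msym by blast
  have "\<bar>\<eta>\<bar> * psym \<eta> \<le> K * m \<eta> ^ (p + 3)" for \<eta>
  proof -
    have "\<bar>\<eta>\<bar> * psym \<eta> \<le> K * m \<eta> * m \<eta> ^ (p + 2)"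
      unfolding msym_power using abs_le[of \<eta>] psym_pos[of \<eta>] by (intro mult_right_mono) auto
    also have "\<dots> = K * m \<eta> ^ Suc (p + 2)"
      by (simp only: power_Suc mult.assoc)
    also have "Suc (p + 2) = p + 3" by simp
    finally show ?thesis .
  qed
  then show ?thesis
    using K by blast
qed

lemma msym_shift_le: "\<exists>L>0. \<forall>\<xi> \<eta>. m \<eta> \<le> (1 + L * \<bar>\<xi>\<bar>) * m (\<xi> - \<eta>)"
proof -
  obtain L where L: "L > 0" and lip: "\<And>x y. \<bar>m x - m y\<bar> \<le> L * \<bar>x - y\<bar>"
    using msym_lipschitz by blast
  have "m \<eta> \<le> (1 + L * \<bar>\<xi>\<bar>) * m (\<xi> - \<eta>)" for \<xi> \<eta>
  proof -
    have "m \<eta> \<le> m (\<xi> - \<eta>) + L * \<bar>\<xi>\<bar>"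
      using lip[of \<eta> "\<eta> - \<xi>"] msym_minus[of "\<xi> - \<eta>"] by simp
    also have "\<dots> \<le> (1 + L * \<bar>\<xi>\<bar>) * m (\<xi> - \<eta>)"
      using mult_left_mono[OF msym_ge_1[of "\<xi> - \<eta>"], of "L * \<bar>\<xi>\<bar>"] L by (simp add: algebra_simps)
    finally show ?thesis .
  qed
  then show ?thesis using L by blast
qed

lemma Lsym_times_i_squared:
  "Lsym c p \<zeta> * (\<i> * complex_of_real \<zeta> * (\<i> * complex_of_real \<zeta> * z)) = complex_of_real (1 - psym \<zeta>) * z"
  by (simp add: Lsym_eq_lsym psym_def power2_eq_square algebra_simps)

lemma norm_Dx_le_psym:
  assumes "cmod (V \<eta>) \<le> cmod (W \<eta>)"
  shows "cmod (\<i> * complex_of_real \<eta> * V \<eta>) \<le> \<bar>\<eta>\<bar> * psym \<eta> * cmod (W \<eta>)"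
  using mult_mono[OF mult_left_mono[OF psym_ge_1[of \<eta>], of "\<bar>\<eta>\<bar>"] assms] psym_pos[of \<eta>]
  by (simp add: norm_mult)

lemma norm_Lsym_Dx3_le_psym:
  assumes "cmod (V \<eta>) \<le> cmod (W \<eta>)"
  shows "cmod (Lsym c p \<eta> * (\<i> * complex_of_real \<eta> * (\<i> * complex_of_real \<eta> * (\<i> * complex_of_real \<eta> * V \<eta>))))
    \<le> \<bar>\<eta>\<bar> * psym \<eta> * cmod (W \<eta>)"
proof -
  have "cmod (Lsym c p \<eta> * (\<i> * complex_of_real \<eta> * (\<i> * complex_of_real \<eta> * (\<i> * complex_of_real \<eta> * V \<eta>))))
      = (lsym \<eta> * \<eta>\<^sup>2 * \<bar>\<eta>\<bar>) * cmod (V \<eta>)"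
    using lsym_nonneg[of \<eta>] by (simp add: norm_mult Lsym_eq_lsym power2_eq_square abs_mult)
  also have "\<dots> \<le> \<bar>\<eta>\<bar> * psym \<eta> * cmod (W \<eta>)"
  proof (rule mult_mono)
    show "lsym \<eta> * \<eta>\<^sup>2 * \<bar>\<eta>\<bar> \<le> \<bar>\<eta>\<bar> * psym \<eta>"
      using lsym_nonneg[of \<eta>] by (simp add: psym_def algebra_simps)
  qed (use assms psym_pos[of \<eta>] in auto)
  finally show ?thesis .
qed

lemma integrable_msym_powr_neg_square:
  assumes t: "t > 1/2"
  shows "integrable lborel (\<lambda>\<xi>. (m \<xi> powr (- t))\<^sup>2)"
proof -
  obtain K where K: "K > 0" and abs_le: "\<And>\<xi>. \<bar>\<xi>\<bar> \<le> K * m \<xi>" using abs_le_msym by blast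
  define K' where "K' = 1 + K"
  have K': "K' > 0" and le: "1 + \<bar>\<xi>\<bar> \<le> K' * m \<xi>" for \<xi>
    using K abs_le[of \<xi>] msym_ge_1[of \<xi>] by (auto simp: K'_def algebra_simps)
  show ?thesis
  proof (rule Bochner_Integration.integrable_bound)
    show "integrable lborel (\<lambda>\<xi>. K' powr (2 * t) * (1 + \<bar>\<xi>\<bar>) powr (- (2 * t)))"
      using integrable_one_plus_abs_powr[of "2 * t"] t by simp
    show "AE \<xi> in lborel. norm ((m \<xi> powr (- t))\<^sup>2) \<le> norm (K' powr (2 * t) * (1 + \<bar>\<xi>\<bar>) powr (- (2 * t)))"
    proof (rule AE_I2)
      fix \<xi> :: real
      have "(m \<xi> powr (- t))\<^sup>2 = m \<xi> powr (- (2 * t))"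
        using msym_pos[of \<xi>] by (simp add: powr_realpow[symmetric] powr_powr mult.commute)
      also have "\<dots> \<le> ((1 + \<bar>\<xi>\<bar>) / K') powr (- (2 * t))"
        using le[of \<xi>] K' t by (intro powr_mono2') (auto simp: field_simps)
      also have "\<dots> = K' powr (2 * t) * (1 + \<bar>\<xi>\<bar>) powr (- (2 * t))"
        using K' by (simp add: powr_divide powr_minus divide_simps)
      finally show "norm ((m \<xi> powr (- t))\<^sup>2) \<le> norm (K' powr (2 * t) * (1 + \<bar>\<xi>\<bar>) powr (- (2 * t)))"
        by simp
    qed
  qed measurable
qed

section \<open>Sobolev spaces on the Fourier side\<close>

lemma hnorm_nonneg: "0 \<le> hnorm c p \<sigma> U"
  by (simp add: hnorm_def)

lemma Hs_measurable: "U \<in> Hs c p \<sigma> \<Longrightarrow> U \<in> borel_measurable borel"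
  by (simp add: Hs_def)

lemma Hs_integrable: "U \<in> Hs c p \<sigma> \<Longrightarrow> integrable lborel (\<lambda>\<xi>. (m \<xi> powr \<sigma> * cmod (U \<xi>))\<^sup>2)"
  by (simp add: Hs_def)

lemma Hs_hermitian: "U \<in> Hs c p \<sigma> \<Longrightarrow> U (- \<xi>) = cnj (U \<xi>)"
  by (simp add: Hs_def)

lemma Hs_integrable_mono:
  assumes U: "U \<in> Hs c p \<sigma>" and "\<tau> \<le> \<sigma>"
  shows "integrable lborel (\<lambda>\<xi>. (m \<xi> powr \<tau> * cmod (U \<xi>))\<^sup>2)"
proof (rule Bochner_Integration.integrable_bound[OF Hs_integrable[OF U]])
  have [measurable]: "U \<in> borel_measurable borel" using Hs_measurable[OF U] .
  show "(\<lambda>\<xi>. (m \<xi> powr \<tau> * cmod (U \<xi>))\<^sup>2) \<in> borel_measurable lborel" by measurable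
  have "m \<xi> powr \<tau> * cmod (U \<xi>) \<le> m \<xi> powr \<sigma> * cmod (U \<xi>)" for \<xi>
    using msym_ge_1[of \<xi>] \<open>\<tau> \<le> \<sigma>\<close> by (intro mult_right_mono powr_mono) auto
  then show "AE \<xi> in lborel. norm ((m \<xi> powr \<tau> * cmod (U \<xi>))\<^sup>2) \<le> norm ((m \<xi> powr \<sigma> * cmod (U \<xi>))\<^sup>2)"
    by (auto intro!: power_mono)
qed

lemma Hs_dominated:
  assumes U1: "U1 \<in> Hs c p \<sigma>" and U2: "U2 \<in> Hs c p \<sigma>"
    and [measurable]: "V \<in> borel_measurable borel" and "\<And>\<xi>. V (- \<xi>) = cnj (V \<xi>)"
    and le: "\<And>\<xi>. cmod (V \<xi>) \<le> cmod (U1 \<xi>) + cmod (U2 \<xi>)"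
  shows "V \<in> Hs c p \<sigma>"
proof -
  have [measurable]: "U1 \<in> borel_measurable borel" "U2 \<in> borel_measurable borel"
    using Hs_measurable U1 U2 by auto
  have bound: "(m \<xi> powr \<sigma> * cmod (V \<xi>))\<^sup>2
      \<le> 2 * (m \<xi> powr \<sigma> * cmod (U1 \<xi>))\<^sup>2 + 2 * (m \<xi> powr \<sigma> * cmod (U2 \<xi>))\<^sup>2" for \<xi>
  proof -
    define x where "x = m \<xi> powr \<sigma>"
    have x0: "0 \<le> x" by (simp add: x_def)
    have "x * cmod (V \<xi>) \<le> x * cmod (U1 \<xi>) + x * cmod (U2 \<xi>)"
      using mult_left_mono[OF le x0] by (simp only: distrib_left)
    then have "(x * cmod (V \<xi>))\<^sup>2 \<le> (x * cmod (U1 \<xi>) + x * cmod (U2 \<xi>))\<^sup>2"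
      using x0 by (intro power_mono) auto
    also have "\<dots> \<le> 2 * (x * cmod (U1 \<xi>))\<^sup>2 + 2 * (x * cmod (U2 \<xi>))\<^sup>2"
      using sum_squares_bound[of "x * cmod (U1 \<xi>)" "x * cmod (U2 \<xi>)"] by (simp add: power2_sum)
    finally show ?thesis by (simp add: x_def)
  qed
  have "integrable lborel (\<lambda>\<xi>. (m \<xi> powr \<sigma> * cmod (V \<xi>))\<^sup>2)"
  proof (rule Bochner_Integration.integrable_bound)
    show "integrable lborel (\<lambda>\<xi>. 2 * (m \<xi> powr \<sigma> * cmod (U1 \<xi>))\<^sup>2 + 2 * (m \<xi> powr \<sigma> * cmod (U2 \<xi>))\<^sup>2)"
      using Hs_integrable[OF U1] Hs_integrable[OF U2] by auto
    show "AE \<xi> in lborel. norm ((m \<xi> powr \<sigma> * cmod (V \<xi>))\<^sup>2)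
        \<le> norm (2 * (m \<xi> powr \<sigma> * cmod (U1 \<xi>))\<^sup>2 + 2 * (m \<xi> powr \<sigma> * cmod (U2 \<xi>))\<^sup>2)"
      using bound by (intro AE_I2) simp
  qed measurable
  then show ?thesis
    using assms by (simp add: Hs_def)
qed

lemma Hs_add:
  assumes "U \<in> Hs c p \<sigma>" "V \<in> Hs c p \<sigma>"
  shows "(\<lambda>\<xi>. U \<xi> + V \<xi>) \<in> Hs c p \<sigma>"
proof (rule Hs_dominated[OF assms])
  have [measurable]: "U \<in> borel_measurable borel" "V \<in> borel_measurable borel"
    using assms Hs_measurable by auto
  show "(\<lambda>\<xi>. U \<xi> + V \<xi>) \<in> borel_measurable borel" by measurable
qed (auto simp: Hs_hermitian[OF assms(1)] Hs_hermitian[OF assms(2)] norm_triangle_ineq)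

lemma Hs_diff:
  assumes "U \<in> Hs c p \<sigma>" "V \<in> Hs c p \<sigma>"
  shows "(\<lambda>\<xi>. U \<xi> - V \<xi>) \<in> Hs c p \<sigma>"
proof (rule Hs_dominated[OF assms])
  have [measurable]: "U \<in> borel_measurable borel" "V \<in> borel_measurable borel"
    using assms Hs_measurable by auto
  show "(\<lambda>\<xi>. U \<xi> - V \<xi>) \<in> borel_measurable borel" by measurable
qed (auto simp: Hs_hermitian[OF assms(1)] Hs_hermitian[OF assms(2)] norm_triangle_ineq4)

lemma Hs_scaleR:
  assumes U: "U \<in> Hs c p \<sigma>"
  shows "(\<lambda>\<xi>. complex_of_real t * U \<xi>) \<in> Hs c p \<sigma>"
proof -
  have [measurable]: "U \<in> borel_measurable borel" using Hs_measurable[OF U] .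
  have "integrable lborel (\<lambda>\<xi>. t\<^sup>2 * (m \<xi> powr \<sigma> * cmod (U \<xi>))\<^sup>2)"
    using Hs_integrable[OF U] by auto
  then show ?thesis
    using Hs_hermitian[OF U] by (simp add: Hs_def norm_mult power_mult_distrib ac_simps)
qed

lemma nn_integral_weighted_square:
  assumes "U \<in> Hs c p \<sigma>"
  shows "(\<integral>\<^sup>+x. ennreal ((m x powr \<sigma> * cmod (U x))\<^sup>2) \<partial>lborel) = ennreal ((hnorm c p \<sigma> U)\<^sup>2)"
  using nn_integral_eq_integral[OF Hs_integrable[OF assms]]
  by (simp add: hnorm_def integral_nonneg_AE)

definition decay_const :: "real \<Rightarrow> real" where
  "decay_const t = (LINT x|lborel. (m x powr (- t))\<^sup>2)"

lemma decay_const_nonneg: "0 \<le> decay_const t"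
  by (simp add: decay_const_def integral_nonneg_AE)

lemma weighted_nn_integral_square_le:
  assumes U: "U \<in> Hs c p \<sigma>" and t: "t > 1/2"
  shows "(\<integral>\<^sup>+x. ennreal (m x powr (\<sigma> - t) * cmod (U x)) \<partial>lborel)\<^sup>2
    \<le> ennreal (decay_const t * (hnorm c p \<sigma> U)\<^sup>2)"
proof -
  have [measurable]: "U \<in> borel_measurable borel" using Hs_measurable[OF U] .
  have split: "m x powr (\<sigma> - t) * cmod (U x) = m x powr (- t) * (m x powr \<sigma> * cmod (U x))" for x
    by (simp add: powr_add[symmetric] mult.assoc)
  have "(\<integral>\<^sup>+x. ennreal (m x powr (\<sigma> - t) * cmod (U x)) \<partial>lborel)\<^sup>2
      \<le> (\<integral>\<^sup>+x. ennreal ((m x powr (- t))\<^sup>2) \<partial>lborel) * (\<integral>\<^sup>+x. ennreal ((m x powr \<sigma> * cmod (U x))\<^sup>2) \<partial>lborel)"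
    unfolding split by (rule Cauchy_Schwarz_nn_integral_real) auto
  also have "\<dots> = ennreal (decay_const t) * ennreal ((hnorm c p \<sigma> U)\<^sup>2)"
    unfolding nn_integral_weighted_square[OF U] decay_const_def
    by (subst nn_integral_eq_integral[OF integrable_msym_powr_neg_square[OF t]]) auto
  also have "\<dots> = ennreal (decay_const t * (hnorm c p \<sigma> U)\<^sup>2)"
    using decay_const_nonneg by (intro ennreal_mult[symmetric]) auto
  finally show ?thesis .
qed

lemma Hs_of_nn_integral_le:
  assumes [measurable]: "V \<in> borel_measurable borel" and herm: "\<And>\<xi>. V (- \<xi>) = cnj (V \<xi>)"
    and X: "0 \<le> X" and le: "(\<integral>\<^sup>+\<xi>. ennreal ((m \<xi> powr \<sigma> * cmod (V \<xi>))\<^sup>2) \<partial>lborel) \<le> ennreal X"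
  shows "V \<in> Hs c p \<sigma>" and "hnorm c p \<sigma> V \<le> sqrt X"
proof -
  have "(\<integral>\<^sup>+\<xi>. ennreal ((m \<xi> powr \<sigma> * cmod (V \<xi>))\<^sup>2) \<partial>lborel) < \<infinity>"
    using le by (rule le_less_trans) simp
  then have int: "integrable lborel (\<lambda>\<xi>. (m \<xi> powr \<sigma> * cmod (V \<xi>))\<^sup>2)"
    by (intro integrableI_nonneg) auto
  then show "V \<in> Hs c p \<sigma>"
    using herm by (simp add: Hs_def)
  have "(LINT \<xi>|lborel. (m \<xi> powr \<sigma> * cmod (V \<xi>))\<^sup>2) \<le> X"
    using le X by (subst (asm) nn_integral_eq_integral[OF int]) auto
  then show "hnorm c p \<sigma> V \<le> sqrt X"
    by (simp add: hnorm_def)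
qed

lemma nn_integral_square_convolution_L1_L2:
  assumes U: "U \<in> Hs c p \<sigma>" and W: "W \<in> Hs c p \<tau>" and t: "t > 1/2"
  shows "(\<integral>\<^sup>+\<xi>. (nn_convolution (\<lambda>x. m x powr (\<sigma> - t) * cmod (U x)) (\<lambda>x. m x powr \<tau> * cmod (W x)) \<xi>)\<^sup>2 \<partial>lborel)
    \<le> ennreal (decay_const t * (hnorm c p \<sigma> U)\<^sup>2 * (hnorm c p \<tau> W)\<^sup>2)"
proof -
  have [measurable]: "U \<in> borel_measurable borel" "W \<in> borel_measurable borel"
    using Hs_measurable U W by auto
  have "(\<integral>\<^sup>+\<xi>. (nn_convolution (\<lambda>x. m x powr (\<sigma> - t) * cmod (U x)) (\<lambda>x. m x powr \<tau> * cmod (W x)) \<xi>)\<^sup>2 \<partial>lborel)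
      \<le> (\<integral>\<^sup>+x. ennreal (m x powr (\<sigma> - t) * cmod (U x)) \<partial>lborel)\<^sup>2
        * (\<integral>\<^sup>+x. ennreal ((m x powr \<tau> * cmod (W x))\<^sup>2) \<partial>lborel)"
    by (rule young_nn_convolution_L1_L2) auto
  also have "\<dots> \<le> ennreal (decay_const t * (hnorm c p \<sigma> U)\<^sup>2) * ennreal ((hnorm c p \<tau> W)\<^sup>2)"
    unfolding nn_integral_weighted_square[OF W]
    by (intro mult_right_mono weighted_nn_integral_square_le[OF U t]) auto
  finally show ?thesis
    by (simp add: ennreal_mult decay_const_nonneg)
qed

lemma nn_integral_square_convolution_L2_L1:
  assumes U: "U \<in> Hs c p \<sigma>" and W: "W \<in> Hs c p \<tau>" and t: "t > 1/2"
  shows "(\<integral>\<^sup>+\<xi>. (nn_convolution (\<lambda>x. m x powr \<sigma> * cmod (U x)) (\<lambda>x. m x powr (\<tau> - t) * cmod (W x)) \<xi>)\<^sup>2 \<partial>lborel)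
    \<le> ennreal (decay_const t * (hnorm c p \<sigma> U)\<^sup>2 * (hnorm c p \<tau> W)\<^sup>2)"
proof -
  have [measurable]: "U \<in> borel_measurable borel" "W \<in> borel_measurable borel"
    using Hs_measurable U W by auto
  have "(\<integral>\<^sup>+\<xi>. (nn_convolution (\<lambda>x. m x powr \<sigma> * cmod (U x)) (\<lambda>x. m x powr (\<tau> - t) * cmod (W x)) \<xi>)\<^sup>2 \<partial>lborel)
      \<le> (\<integral>\<^sup>+x. ennreal (m x powr (\<tau> - t) * cmod (W x)) \<partial>lborel)\<^sup>2
        * (\<integral>\<^sup>+x. ennreal ((m x powr \<sigma> * cmod (U x))\<^sup>2) \<partial>lborel)"
    by (rule young_nn_convolution_L2_L1) auto
  also have "\<dots> \<le> ennreal (decay_const t * (hnorm c p \<tau> W)\<^sup>2) * ennreal ((hnorm c p \<sigma> U)\<^sup>2)"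
    unfolding nn_integral_weighted_square[OF U]
    by (intro mult_right_mono weighted_nn_integral_square_le[OF W t]) auto
  finally show ?thesis
    by (simp add: ennreal_mult decay_const_nonneg mult_ac)
qed

end

section \<open>The operator \<open>B(u)\<close>\<close>

locale commutator_setting = symbol_setting +
  fixes a b s :: real
  assumes a_pos: "a > 0" and b_pos: "b > 0" and s_gt: "s > 7/2 + real p"
begin

definition kappa :: complex where "kappa = complex_of_real (1 / sqrt (2 * pi))"

lemma integrable_Aop_majorant:
  assumes U: "U \<in> Hs c p s" and W: "W \<in> Hs c p (s - 1)"
  shows "integrable lborel (\<lambda>\<eta>. cmod (U (\<xi> - \<eta>)) * (\<bar>\<eta>\<bar> * psym \<eta>) * cmod (W \<eta>))"
proof -
  have [measurable]: "U \<in> borel_measurable borel" "W \<in> borel_measurable borel"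
    using Hs_measurable U W by auto
  obtain K where K: "K > 0" and psym_le: "\<And>\<eta>. \<bar>\<eta>\<bar> * psym \<eta> \<le> K * m \<eta> ^ (p + 3)"
    using abs_mult_psym_le by blast
  obtain L where L: "L > 0" and shift: "\<And>\<xi> \<eta>. m \<eta> \<le> (1 + L * \<bar>\<xi>\<bar>) * m (\<xi> - \<eta>)"
    using msym_shift_le by blast
  define C where "C = K * (1 + L * \<bar>\<xi>\<bar>) ^ (p + 3)"
  have C: "0 \<le> C" using K L by (simp add: C_def)
  have bound: "\<bar>\<eta>\<bar> * psym \<eta> \<le> C * m (\<xi> - \<eta>) ^ (p + 3)" for \<eta>
    using order_trans[OF psym_le mult_left_mono[OF power_mono[OF shift[of \<eta> \<xi>]]]] K msym_pos[of \<eta>]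
    by (simp add: C_def power_mult_distrib mult.assoc)
  have "integrable lborel (\<lambda>\<zeta>. (m \<zeta> powr real (p + 3) * cmod (U \<zeta>))\<^sup>2)"
    using s_gt by (intro Hs_integrable_mono[OF U]) auto
  moreover have "m \<zeta> powr real (p + 3) = m \<zeta> ^ (p + 3)" for \<zeta>
    using msym_pos[of \<zeta>] by (rule powr_realpow)
  ultimately have U_weighted: "integrable lborel (\<lambda>\<zeta>. (m \<zeta> ^ (p + 3) * cmod (U \<zeta>))\<^sup>2)"
    by simp
  have W_L2: "integrable lborel (\<lambda>\<zeta>. (cmod (W \<zeta>))\<^sup>2)"
    using Hs_integrable_mono[OF W, of 0] s_gt by simp
  have "integrable lborel (\<lambda>\<eta>. (m (\<xi> - \<eta>) ^ (p + 3) * cmod (U (\<xi> - \<eta>))) * cmod (W \<eta>))"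
    using lborel_integrable_real_affine[OF U_weighted, of "-1" \<xi>] W_L2
    by (intro integrable_mult_of_square_integrable) auto
  then show ?thesis
  proof (rule Bochner_Integration.integrable_bound[OF integrable_mult_right[of C]])
    have "cmod (U (\<xi> - \<eta>)) * (\<bar>\<eta>\<bar> * psym \<eta>) * cmod (W \<eta>)
        \<le> C * (m (\<xi> - \<eta>) ^ (p + 3) * cmod (U (\<xi> - \<eta>)) * cmod (W \<eta>))" for \<eta>
      using mult_right_mono[OF mult_left_mono[OF bound[of \<eta>], of "cmod (U (\<xi> - \<eta>))"], of "cmod (W \<eta>)"]
      by (simp add: ac_simps)
    then show "AE \<eta> in lborel. norm (cmod (U (\<xi> - \<eta>)) * (\<bar>\<eta>\<bar> * psym \<eta>) * cmod (W \<eta>))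
        \<le> norm (C * (m (\<xi> - \<eta>) ^ (p + 3) * cmod (U (\<xi> - \<eta>)) * cmod (W \<eta>)))"
      using C by (intro AE_I2) (simp add: abs_mult power_abs abs_of_pos[OF psym_pos] abs_of_pos[OF msym_pos])
  qed measurable
qed

lemma integrable_Aop_integrands:
  assumes U: "U \<in> Hs c p s" and W: "W \<in> Hs c p (s - 1)"
    and [measurable]: "V \<in> borel_measurable borel" and V_le: "\<And>\<eta>. cmod (V \<eta>) \<le> cmod (W \<eta>)"
  shows "integrable lborel (\<lambda>\<eta>. U (\<xi> - \<eta>) * (\<i> * complex_of_real \<eta> * V \<eta>))"
    and "integrable lborel (\<lambda>\<eta>. U (\<xi> - \<eta>) * (Lsym c p \<eta> * (\<i> * complex_of_real \<eta>
      * (\<i> * complex_of_real \<eta> * (\<i> * complex_of_real \<eta> * V \<eta>)))))"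
proof -
  have [measurable]: "U \<in> borel_measurable borel" "W \<in> borel_measurable borel"
    using Hs_measurable U W by auto
  have dominated: "integrable lborel (\<lambda>\<eta>. U (\<xi> - \<eta>) * F \<eta>)"
    if [measurable]: "F \<in> borel_measurable borel"
      and F_le: "\<And>\<eta>. cmod (F \<eta>) \<le> \<bar>\<eta>\<bar> * psym \<eta> * cmod (W \<eta>)" for F
  proof (rule Bochner_Integration.integrable_bound[OF integrable_Aop_majorant[OF U W, of \<xi>]])
    have "norm (U (\<xi> - \<eta>) * F \<eta>) \<le> norm (cmod (U (\<xi> - \<eta>)) * (\<bar>\<eta>\<bar> * psym \<eta>) * cmod (W \<eta>))" for \<eta>
      using mult_left_mono[OF F_le[of \<eta>], of "cmod (U (\<xi> - \<eta>))"]
      by (simp add: norm_mult mult.assoc abs_mult abs_of_pos[OF psym_pos])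
    then show "AE \<eta> in lborel. norm (U (\<xi> - \<eta>) * F \<eta>)
        \<le> norm (cmod (U (\<xi> - \<eta>)) * (\<bar>\<eta>\<bar> * psym \<eta>) * cmod (W \<eta>))"
      by simp
  qed measurable
  show "integrable lborel (\<lambda>\<eta>. U (\<xi> - \<eta>) * (\<i> * complex_of_real \<eta> * V \<eta>))"
    by (rule dominated) (measurable, intro norm_Dx_le_psym V_le)
  show "integrable lborel (\<lambda>\<eta>. U (\<xi> - \<eta>) * (Lsym c p \<eta> * (\<i> * complex_of_real \<eta>
      * (\<i> * complex_of_real \<eta> * (\<i> * complex_of_real \<eta> * V \<eta>)))))"
    by (rule dominated) (measurable, intro norm_Lsym_Dx3_le_psym V_le)
qed

lemma Aop_convolution:
  assumes i1: "integrable lborel (\<lambda>\<eta>. U (\<xi> - \<eta>) * (\<i> * complex_of_real \<eta> * V \<eta>))"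
    and i2: "integrable lborel (\<lambda>\<eta>. U (\<xi> - \<eta>) * (Lsym c p \<eta> * (\<i> * complex_of_real \<eta>
      * (\<i> * complex_of_real \<eta> * (\<i> * complex_of_real \<eta> * V \<eta>)))))"
  shows "integrable lborel
      (\<lambda>\<eta>. U (\<xi> - \<eta>) * (\<i> * complex_of_real \<eta> * V \<eta>) * complex_of_real (a + b * psym \<eta> / psym \<xi>))"
    and "Aop a b c p U V \<xi> = kappa *
      (LINT \<eta>|lborel. U (\<xi> - \<eta>) * (\<i> * complex_of_real \<eta> * V \<eta>) * complex_of_real (a + b * psym \<eta> / psym \<xi>))"
proof -
  define f where "f \<eta> = U (\<xi> - \<eta>) * (\<i> * complex_of_real \<eta> * V \<eta>)" for \<eta>
  define g where "g \<eta> = U (\<xi> - \<eta>) * (Lsym c p \<eta> * (\<i> * complex_of_real \<eta>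
    * (\<i> * complex_of_real \<eta> * (\<i> * complex_of_real \<eta> * V \<eta>))))" for \<eta>
  have fi: "integrable lborel f" using i1 by (simp add: f_def[abs_def])
  have gi: "integrable lborel g" using i2 by (simp add: g_def[abs_def])
  have fg: "f \<eta> * complex_of_real (psym \<eta>) = f \<eta> - g \<eta>" for \<eta>
    unfolding f_def g_def Lsym_times_i_squared by (simp add: algebra_simps)
  have fPi: "integrable lborel (\<lambda>\<eta>. f \<eta> * complex_of_real (psym \<eta>))"
    unfolding fg using fi gi by auto
  have "(LINT \<eta>|lborel. f \<eta> * complex_of_real (a + b * psym \<eta> / psym \<xi>))
      = (LINT \<eta>|lborel. complex_of_real a * f \<eta> + complex_of_real (b / psym \<xi>) * (f \<eta> * complex_of_real (psym \<eta>)))"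
    by (intro Bochner_Integration.integral_cong) (auto simp: algebra_simps)
  also have "\<dots> = complex_of_real a * (LINT \<eta>|lborel. f \<eta>)
      + complex_of_real (b / psym \<xi>) * ((LINT \<eta>|lborel. f \<eta>) - (LINT \<eta>|lborel. g \<eta>))"
    using fi fPi gi by (simp add: fg)
  finally have T: "(LINT \<eta>|lborel. f \<eta> * complex_of_real (a + b * psym \<eta> / psym \<xi>))
      = complex_of_real a * (LINT \<eta>|lborel. f \<eta>)
        + complex_of_real (b / psym \<xi>) * ((LINT \<eta>|lborel. f \<eta>) - (LINT \<eta>|lborel. g \<eta>))" .
  have "Aop a b c p U V \<xi> = complex_of_real (a + b) * (kappa * (LINT \<eta>|lborel. f \<eta>))
      + complex_of_real b * (complex_of_real (1 / psym \<xi>)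
        * (complex_of_real (1 - psym \<xi>) * (kappa * (LINT \<eta>|lborel. f \<eta>)) - kappa * (LINT \<eta>|lborel. g \<eta>)))"
    unfolding Aop_def GammaPow_def Lop_def Dx_def Mult_def msym_powr_neg Lsym_times_i_squared[of \<xi>]
    by (simp add: kappa_def f_def g_def)
  then show "Aop a b c p U V \<xi> = kappa *
      (LINT \<eta>|lborel. U (\<xi> - \<eta>) * (\<i> * complex_of_real \<eta> * V \<eta>) * complex_of_real (a + b * psym \<eta> / psym \<xi>))"
    unfolding f_def[symmetric] T using psym_pos[of \<xi>] by (simp add: field_simps)
  have "integrable lborel (\<lambda>\<eta>. complex_of_real a * f \<eta> + complex_of_real (b / psym \<xi>) * (f \<eta> * complex_of_real (psym \<eta>)))"
    using fi fPi by simp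
  then show "integrable lborel
      (\<lambda>\<eta>. U (\<xi> - \<eta>) * (\<i> * complex_of_real \<eta> * V \<eta>) * complex_of_real (a + b * psym \<eta> / psym \<xi>))"
    by (rule Bochner_Integration.integrable_cong[THEN iffD1, rotated 2]) (auto simp: f_def algebra_simps)
qed

definition Bkernel :: "real \<Rightarrow> real \<Rightarrow> complex" where
  "Bkernel \<xi> \<eta> = \<i> * complex_of_real \<eta> * complex_of_real ((a + b * psym \<eta> / psym \<xi>) * (m \<xi> / m \<eta> - 1))"

lemma Bop_convolution:
  assumes U: "U \<in> Hs c p s" and W: "W \<in> Hs c p (s - 1)"
  shows "integrable lborel (\<lambda>\<eta>. U (\<xi> - \<eta>) * W \<eta> * Bkernel \<xi> \<eta>)"
    and "Bop a b c p U W \<xi> = kappa * (LINT \<eta>|lborel. U (\<xi> - \<eta>) * W \<eta> * Bkernel \<xi> \<eta>)"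
proof -
  have [measurable]: "U \<in> borel_measurable borel" and W_meas [measurable]: "W \<in> borel_measurable borel"
    using Hs_measurable U W by auto
  define V where "V = GammaPow c p (-1) W"
  have V_eq: "V \<eta> = complex_of_real (1 / m \<eta>) * W \<eta>" for \<eta>
    using msym_pos[of \<eta>] by (simp add: V_def GammaPow_def powr_minus_divide)
  have V_meas [measurable]: "V \<in> borel_measurable borel" unfolding V_def GammaPow_def by measurable
  have V_le: "cmod (V \<eta>) \<le> cmod (W \<eta>)" for \<eta>
  proof -
    have "cmod (V \<eta>) = (1 / m \<eta>) * cmod (W \<eta>)"
      using msym_pos[of \<eta>] by (simp add: V_eq norm_mult norm_divide)
    also have "\<dots> \<le> 1 * cmod (W \<eta>)"
      using msym_ge_1[of \<eta>] by (intro mult_right_mono) auto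
    finally show ?thesis by simp
  qed
  note A_V = Aop_convolution[OF integrable_Aop_integrands[OF U W V_meas V_le]]
  note A_W = Aop_convolution[OF integrable_Aop_integrands[OF U W W_meas order.refl]]
  define F where "F X \<eta> = U (\<xi> - \<eta>) * (\<i> * complex_of_real \<eta> * X \<eta>) * complex_of_real (a + b * psym \<eta> / psym \<xi>)"
    for X \<eta>
  have iV: "integrable lborel (F V)" and iW: "integrable lborel (F W)"
    using A_V(1) A_W(1) by (simp_all add: F_def[abs_def])
  have kernel: "complex_of_real (m \<xi>) * F V \<eta> - F W \<eta> = U (\<xi> - \<eta>) * W \<eta> * Bkernel \<xi> \<eta>" for \<eta>
    using psym_pos[of \<xi>] msym_pos[of \<eta>] by (simp add: F_def Bkernel_def V_eq field_simps)
  have "integrable lborel (\<lambda>\<eta>. complex_of_real (m \<xi>) * F V \<eta> - F W \<eta>)" using iV iW by auto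
  then show "integrable lborel (\<lambda>\<eta>. U (\<xi> - \<eta>) * W \<eta> * Bkernel \<xi> \<eta>)" unfolding kernel .
  have "Bop a b c p U W \<xi> = complex_of_real (m \<xi>) * Aop a b c p U V \<xi> - Aop a b c p U W \<xi>"
    using msym_pos[of \<xi>] by (simp add: Bop_def GammaPow_def V_def)
  also have "\<dots> = kappa * (complex_of_real (m \<xi>) * (LINT \<eta>|lborel. F V \<eta>) - (LINT \<eta>|lborel. F W \<eta>))"
    unfolding A_V(2) A_W(2) F_def by (simp add: algebra_simps)
  also have "\<dots> = kappa * (LINT \<eta>|lborel. complex_of_real (m \<xi>) * F V \<eta> - F W \<eta>)"
    using iV iW by simp
  finally show "Bop a b c p U W \<xi> = kappa * (LINT \<eta>|lborel. U (\<xi> - \<eta>) * W \<eta> * Bkernel \<xi> \<eta>)"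
    unfolding kernel .
qed

lemma norm_Bkernel:
  "cmod (Bkernel \<xi> \<eta>) = \<bar>\<eta>\<bar> / m \<eta> * \<bar>m \<xi> - m \<eta>\<bar> * (a + b * m \<eta> ^ (p + 2) / m \<xi> ^ (p + 2))"
proof -
  have "0 \<le> a + b * psym \<eta> / psym \<xi>"
    using a_pos b_pos psym_pos[of \<eta>] psym_pos[of \<xi>] by simp
  moreover have "m \<xi> / m \<eta> - 1 = (m \<xi> - m \<eta>) / m \<eta>"
    using msym_pos[of \<eta>] by (simp add: diff_divide_distrib)
  ultimately show ?thesis
    using msym_pos[of \<eta>] unfolding Bkernel_def msym_power
    by (simp add: norm_mult abs_mult abs_divide del: of_real_mult of_real_add of_real_divide of_real_diff
        add: of_real_mult[symmetric])
qed

lemma Bkernel_weighted_bound: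
  "\<exists>C>0. \<forall>\<xi> \<eta>. m \<xi> powr (s - 1) * cmod (Bkernel \<xi> \<eta>)
      \<le> C * (m (\<xi> - \<eta>) * m \<eta> powr (s - 1) + m (\<xi> - \<eta>) powr s * m \<eta> ^ (p + 2))"
proof -
  obtain K where K: "K > 0" and abs_le: "\<And>\<xi>. \<bar>\<xi>\<bar> \<le> K * m \<xi>" using abs_le_msym by blast
  obtain L where L: "L > 0" and lip: "\<And>x y. \<bar>m x - m y\<bar> \<le> L * \<bar>x - y\<bar>" using msym_lipschitz by blast
  define B where "B = max 1 (L * K)"
  define C where "C = K * (L * K) * (a * (2 * B) powr (s - 1) + b * (2 * B) powr (s - 1 - real (p + 2)))"
  have "m \<xi> powr (s - 1) * cmod (Bkernel \<xi> \<eta>)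
      \<le> C * (m (\<xi> - \<eta>) * m \<eta> powr (s - 1) + m (\<xi> - \<eta>) powr s * m \<eta> ^ (p + 2))" for \<xi> \<eta>
  proof -
    define x y z where "x = m \<xi>" and "y = m \<eta>" and "z = m (\<xi> - \<eta>)"
    have x: "0 < x" and y: "1 \<le> y" and z: "1 \<le> z"
      using msym_pos msym_ge_1 by (auto simp: x_def y_def z_def)
    have zs: "z powr s = z * z powr (s - 1)"
      using z powr_add[of z 1 "s - 1"] by simp
    \<comment> \<open>the commutator with \<open>\<Gamma>\<close> trades \<open>m \<xi> - m \<eta>\<close> for \<open>m (\<xi> - \<eta>)\<close>, and \<open>\<bar>\<eta>\<bar> / m \<eta>\<close> is bounded\<close>
    have xy: "\<bar>x - y\<bar> \<le> L * K * z"
      using order_trans[OF lip[of \<xi> \<eta>] mult_left_mono[OF abs_le[of "\<xi> - \<eta>"], of L]] L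
      by (simp add: x_def y_def z_def mult.assoc)
    have "\<bar>\<eta>\<bar> / y \<le> K" using abs_le[of \<eta>] y by (simp add: y_def divide_le_eq)
    then have "cmod (Bkernel \<xi> \<eta>) \<le> K * (L * K * z) * (a + b * y ^ (p + 2) / x ^ (p + 2))"
      unfolding norm_Bkernel x_def[symmetric] y_def[symmetric]
      using xy a_pos b_pos x y K by (intro mult_right_mono mult_mono) auto
    then have "x powr (s - 1) * cmod (Bkernel \<xi> \<eta>)
        \<le> x powr (s - 1) * (K * (L * K * z) * (a + b * y ^ (p + 2) / x ^ (p + 2)))"
      by (rule mult_left_mono) simp
    also have "\<dots> = K * (L * K) * z * (x powr (s - 1) * (a + b * y ^ (p + 2) / x ^ (p + 2)))"
      by (simp only: ac_simps)
    also have "\<dots> \<le> K * (L * K) * z * ((a * (2 * B) powr (s - 1) + b * (2 * B) powr (s - 1 - real (p + 2)))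
        * (y powr (s - 1) + z powr (s - 1) * y ^ (p + 2)))"
    proof (intro mult_left_mono powr_weight_ratio_bound)
      have "x \<le> y + L * K * z" using xy by simp
      also have "\<dots> \<le> B * y + B * z"
        using y z by (intro add_mono mult_right_mono) (auto simp: B_def)
      finally show "x \<le> B * (y + z)" by (simp add: distrib_left)
    qed (use x y z a_pos b_pos s_gt K L in \<open>auto simp: B_def\<close>)
    also have "\<dots> = C * (z * y powr (s - 1) + z powr s * y ^ (p + 2))"
      using zs by (simp add: C_def algebra_simps)
    finally show ?thesis by (simp add: x_def y_def z_def)
  qed
  moreover have "C > 0"
    using K L a_pos b_pos by (simp add: C_def B_def add_pos_pos)
  ultimately show ?thesis by blast
qed

lemma Bop_measurable:
  assumes U: "U \<in> Hs c p s" and W: "W \<in> Hs c p (s - 1)"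
  shows "Bop a b c p U W \<in> borel_measurable borel"
proof -
  have [measurable]: "U \<in> borel_measurable borel" "W \<in> borel_measurable borel"
    using Hs_measurable U W by auto
  have eq: "Bop a b c p U W = (\<lambda>\<xi>. kappa * (LINT \<eta>|lborel. U (\<xi> - \<eta>) * W \<eta> * Bkernel \<xi> \<eta>))"
    using Bop_convolution(2)[OF U W] by blast
  show ?thesis unfolding eq Bkernel_def by measurable
qed

lemma Bop_hermitian:
  assumes U: "U \<in> Hs c p s" and W: "W \<in> Hs c p (s - 1)"
  shows "Bop a b c p U W (- \<xi>) = cnj (Bop a b c p U W \<xi>)"
proof -
  have "(LINT \<eta>|lborel. U (- \<xi> - \<eta>) * W \<eta> * Bkernel (- \<xi>) \<eta>)
      = (LINT \<eta>|lborel. U (- \<xi> - (0 + (-1) * \<eta>)) * W (0 + (-1) * \<eta>) * Bkernel (- \<xi>) (0 + (-1) * \<eta>))"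
    using lborel_integral_real_affine[of "-1" "\<lambda>\<eta>. U (- \<xi> - \<eta>) * W \<eta> * Bkernel (- \<xi>) \<eta>" 0] by simp
  also have "\<dots> = (LINT \<eta>|lborel. cnj (U (\<xi> - \<eta>) * W \<eta> * Bkernel \<xi> \<eta>))"
    using Hs_hermitian[OF U, of "\<xi> - _"] Hs_hermitian[OF W]
    by (intro Bochner_Integration.integral_cong) (simp_all add: Bkernel_def psym_minus msym_minus)
  also have "\<dots> = cnj (LINT \<eta>|lborel. U (\<xi> - \<eta>) * W \<eta> * Bkernel \<xi> \<eta>)"
    by (rule Bochner_Integration.integral_cnj)
  finally show ?thesis
    unfolding Bop_convolution(2)[OF U W] by (simp add: kappa_def)
qed

lemma Bop_weighted_le_convolution:
  assumes U: "U \<in> Hs c p s" and W: "W \<in> Hs c p (s - 1)" and C: "0 \<le> C"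
    and kernel_le: "\<And>\<xi> \<eta>. m \<xi> powr (s - 1) * cmod (Bkernel \<xi> \<eta>)
      \<le> C * (m (\<xi> - \<eta>) * m \<eta> powr (s - 1) + m (\<xi> - \<eta>) powr s * m \<eta> ^ (p + 2))"
  shows "ennreal (m \<xi> powr (s - 1) * cmod (Bop a b c p U W \<xi>))
    \<le> ennreal (cmod kappa * C) *
      (nn_convolution (\<lambda>x. m x * cmod (U x)) (\<lambda>x. m x powr (s - 1) * cmod (W x)) \<xi>
       + nn_convolution (\<lambda>x. m x powr s * cmod (U x)) (\<lambda>x. m x ^ (p + 2) * cmod (W x)) \<xi>)"
proof -
  have [measurable]: "U \<in> borel_measurable borel" "W \<in> borel_measurable borel"
    using Hs_measurable U W by auto
  define h where "h \<eta> = U (\<xi> - \<eta>) * W \<eta> * Bkernel \<xi> \<eta>" for \<eta>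
  have h_int: "integrable lborel h"
    using Bop_convolution(1)[OF U W, of \<xi>] by (simp add: h_def[abs_def])
  then have [measurable]: "h \<in> borel_measurable lborel" by auto
  have h_le: "m \<xi> powr (s - 1) * cmod kappa * norm (h \<eta>)
      \<le> cmod kappa * C * (m (\<xi> - \<eta>) * cmod (U (\<xi> - \<eta>)) * (m \<eta> powr (s - 1) * cmod (W \<eta>))
        + m (\<xi> - \<eta>) powr s * cmod (U (\<xi> - \<eta>)) * (m \<eta> ^ (p + 2) * cmod (W \<eta>)))" for \<eta>
    using mult_right_mono[OF kernel_le[of \<xi> \<eta>], of "cmod kappa * (cmod (U (\<xi> - \<eta>)) * cmod (W \<eta>))"]
    by (simp add: h_def norm_mult algebra_simps)
  have "ennreal (m \<xi> powr (s - 1) * cmod (Bop a b c p U W \<xi>))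
      = ennreal (m \<xi> powr (s - 1) * cmod kappa) * ennreal (cmod (LINT \<eta>|lborel. h \<eta>))"
    unfolding Bop_convolution(2)[OF U W] h_def[symmetric]
    by (simp add: norm_mult ennreal_mult[symmetric] mult.assoc)
  also have "\<dots> \<le> ennreal (m \<xi> powr (s - 1) * cmod kappa) * (\<integral>\<^sup>+\<eta>. ennreal (norm (h \<eta>)) \<partial>lborel)"
    by (intro mult_left_mono integral_norm_bound_ennreal h_int) auto
  also have "\<dots> = (\<integral>\<^sup>+\<eta>. ennreal (m \<xi> powr (s - 1) * cmod kappa * norm (h \<eta>)) \<partial>lborel)"
    by (subst nn_integral_cmult[symmetric]) (auto simp: ennreal_mult)
  also have "\<dots> \<le> (\<integral>\<^sup>+\<eta>. ennreal (cmod kappa * C) *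
      (ennreal (m (\<xi> - \<eta>) * cmod (U (\<xi> - \<eta>)) * (m \<eta> powr (s - 1) * cmod (W \<eta>)))
       + ennreal (m (\<xi> - \<eta>) powr s * cmod (U (\<xi> - \<eta>)) * (m \<eta> ^ (p + 2) * cmod (W \<eta>)))) \<partial>lborel)"
  proof (rule nn_integral_mono)
    fix \<eta>
    have "ennreal (m \<xi> powr (s - 1) * cmod kappa * norm (h \<eta>))
        \<le> ennreal (cmod kappa * C * (m (\<xi> - \<eta>) * cmod (U (\<xi> - \<eta>)) * (m \<eta> powr (s - 1) * cmod (W \<eta>))
          + m (\<xi> - \<eta>) powr s * cmod (U (\<xi> - \<eta>)) * (m \<eta> ^ (p + 2) * cmod (W \<eta>))))"
      by (rule ennreal_leI[OF h_le])
    also have "\<dots> = ennreal (cmod kappa * C) *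
        (ennreal (m (\<xi> - \<eta>) * cmod (U (\<xi> - \<eta>)) * (m \<eta> powr (s - 1) * cmod (W \<eta>)))
         + ennreal (m (\<xi> - \<eta>) powr s * cmod (U (\<xi> - \<eta>)) * (m \<eta> ^ (p + 2) * cmod (W \<eta>))))"
      using C msym_pos[of "\<xi> - \<eta>"] msym_pos[of \<eta>] by (simp add: ennreal_mult')
    finally show "ennreal (m \<xi> powr (s - 1) * cmod kappa * norm (h \<eta>)) \<le> ennreal (cmod kappa * C) *
        (ennreal (m (\<xi> - \<eta>) * cmod (U (\<xi> - \<eta>)) * (m \<eta> powr (s - 1) * cmod (W \<eta>)))
         + ennreal (m (\<xi> - \<eta>) powr s * cmod (U (\<xi> - \<eta>)) * (m \<eta> ^ (p + 2) * cmod (W \<eta>))))" .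
  qed
  also have "\<dots> = ennreal (cmod kappa * C) *
      (nn_convolution (\<lambda>x. m x * cmod (U x)) (\<lambda>x. m x powr (s - 1) * cmod (W x)) \<xi>
       + nn_convolution (\<lambda>x. m x powr s * cmod (U x)) (\<lambda>x. m x ^ (p + 2) * cmod (W x)) \<xi>)"
    unfolding nn_convolution_def
    by (subst nn_integral_cmult, measurable, subst nn_integral_add, measurable)
  finally show ?thesis .
qed

lemma Bop_weighted_square_le_convolution:
  assumes U: "U \<in> Hs c p s" and W: "W \<in> Hs c p (s - 1)" and C: "0 \<le> C"
    and kernel_le: "\<And>\<xi> \<eta>. m \<xi> powr (s - 1) * cmod (Bkernel \<xi> \<eta>)
      \<le> C * (m (\<xi> - \<eta>) * m \<eta> powr (s - 1) + m (\<xi> - \<eta>) powr s * m \<eta> ^ (p + 2))"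
  shows "ennreal ((m \<xi> powr (s - 1) * cmod (Bop a b c p U W \<xi>))\<^sup>2)
    \<le> ennreal ((cmod kappa * C)\<^sup>2) * (2 * (((nn_convolution (\<lambda>x. m x * cmod (U x)) (\<lambda>x. m x powr (s - 1) * cmod (W x))) \<xi>)\<^sup>2 + ((nn_convolution (\<lambda>x. m x powr s * cmod (U x)) (\<lambda>x. m x ^ (p + 2) * cmod (W x))) \<xi>)\<^sup>2))"
proof -
  have "ennreal ((m \<xi> powr (s - 1) * cmod (Bop a b c p U W \<xi>))\<^sup>2)
      = (ennreal (m \<xi> powr (s - 1) * cmod (Bop a b c p U W \<xi>)))\<^sup>2"
    by (simp add: ennreal_power)
  also have "\<dots> \<le> (ennreal (cmod kappa * C) * ((nn_convolution (\<lambda>x. m x * cmod (U x)) (\<lambda>x. m x powr (s - 1) * cmod (W x))) \<xi> + (nn_convolution (\<lambda>x. m x powr s * cmod (U x)) (\<lambda>x. m x ^ (p + 2) * cmod (W x))) \<xi>))\<^sup>2"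
    by (intro power_mono Bop_weighted_le_convolution[OF U W C kernel_le]) auto
  also have "\<dots> = ennreal ((cmod kappa * C)\<^sup>2) * ((nn_convolution (\<lambda>x. m x * cmod (U x)) (\<lambda>x. m x powr (s - 1) * cmod (W x))) \<xi> + (nn_convolution (\<lambda>x. m x powr s * cmod (U x)) (\<lambda>x. m x ^ (p + 2) * cmod (W x))) \<xi>)\<^sup>2"
    using C by (simp add: power_mult_distrib ennreal_power)
  also have "\<dots> \<le> ennreal ((cmod kappa * C)\<^sup>2) * (2 * (((nn_convolution (\<lambda>x. m x * cmod (U x)) (\<lambda>x. m x powr (s - 1) * cmod (W x))) \<xi>)\<^sup>2 + ((nn_convolution (\<lambda>x. m x powr s * cmod (U x)) (\<lambda>x. m x ^ (p + 2) * cmod (W x))) \<xi>)\<^sup>2))"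
    by (intro mult_left_mono ennreal_add_square_le) auto
  finally show ?thesis .
qed

lemma nn_integral_square_Bop_terms_le:
  assumes U: "U \<in> Hs c p s" and W: "W \<in> Hs c p (s - 1)"
  shows "(\<integral>\<^sup>+\<xi>. ((nn_convolution (\<lambda>x. m x * cmod (U x)) (\<lambda>x. m x powr (s - 1) * cmod (W x))) \<xi>)\<^sup>2 \<partial>lborel)
      \<le> ennreal (decay_const (s - 1) * (hnorm c p s U)\<^sup>2 * (hnorm c p (s - 1) W)\<^sup>2)"
    and "(\<integral>\<^sup>+\<xi>. ((nn_convolution (\<lambda>x. m x powr s * cmod (U x)) (\<lambda>x. m x ^ (p + 2) * cmod (W x))) \<xi>)\<^sup>2 \<partial>lborel)
      \<le> ennreal (decay_const (s - real p - 3) * (hnorm c p s U)\<^sup>2 * (hnorm c p (s - 1) W)\<^sup>2)"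
proof -
  show "(\<integral>\<^sup>+\<xi>. ((nn_convolution (\<lambda>x. m x * cmod (U x)) (\<lambda>x. m x powr (s - 1) * cmod (W x))) \<xi>)\<^sup>2 \<partial>lborel)
      \<le> ennreal (decay_const (s - 1) * (hnorm c p s U)\<^sup>2 * (hnorm c p (s - 1) W)\<^sup>2)"
    using nn_integral_square_convolution_L1_L2[OF U W, of "s - 1"] s_gt by (simp add: abs_of_pos[OF msym_pos])
  have "m x powr (s - 1 - (s - real p - 3)) = m x ^ (p + 2)" for x
    using msym_pos[of x] powr_realpow[of "m x" "p + 2"] by (simp add: add.commute)
  then show "(\<integral>\<^sup>+\<xi>. ((nn_convolution (\<lambda>x. m x powr s * cmod (U x)) (\<lambda>x. m x ^ (p + 2) * cmod (W x))) \<xi>)\<^sup>2 \<partial>lborel)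
      \<le> ennreal (decay_const (s - real p - 3) * (hnorm c p s U)\<^sup>2 * (hnorm c p (s - 1) W)\<^sup>2)"
    using nn_integral_square_convolution_L2_L1[OF U W, of "s - real p - 3"] s_gt by simp
qed

lemma Bop_weighted_nn_integral_le:
  "\<exists>C\<ge>0. \<forall>U\<in>Hs c p s. \<forall>W\<in>Hs c p (s - 1).
     (\<integral>\<^sup>+\<xi>. ennreal ((m \<xi> powr (s - 1) * cmod (Bop a b c p U W \<xi>))\<^sup>2) \<partial>lborel)
       \<le> ennreal (C * (hnorm c p s U)\<^sup>2 * (hnorm c p (s - 1) W)\<^sup>2)"
proof -
  obtain C where C: "C > 0" and kernel_le: "\<And>\<xi> \<eta>. m \<xi> powr (s - 1) * cmod (Bkernel \<xi> \<eta>)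
      \<le> C * (m (\<xi> - \<eta>) * m \<eta> powr (s - 1) + m (\<xi> - \<eta>) powr s * m \<eta> ^ (p + 2))"
    using Bkernel_weighted_bound by blast
  define K where "K = (cmod kappa * C)\<^sup>2"
  define D where "D = decay_const (s - 1) + decay_const (s - real p - 3)"
  have D: "0 \<le> D" by (simp add: D_def decay_const_nonneg)
  have "(\<integral>\<^sup>+\<xi>. ennreal ((m \<xi> powr (s - 1) * cmod (Bop a b c p U W \<xi>))\<^sup>2) \<partial>lborel)
      \<le> ennreal (2 * K * D * (hnorm c p s U)\<^sup>2 * (hnorm c p (s - 1) W)\<^sup>2)"
    if U: "U \<in> Hs c p s" and W: "W \<in> Hs c p (s - 1)" for U W
  proof -
    have [measurable]: "U \<in> borel_measurable borel" "W \<in> borel_measurable borel"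
      using Hs_measurable U W by auto
    have [measurable]: "nn_convolution (\<lambda>x. m x * cmod (U x)) (\<lambda>x. m x powr (s - 1) * cmod (W x)) \<in> borel_measurable borel"
      "nn_convolution (\<lambda>x. m x powr s * cmod (U x)) (\<lambda>x. m x ^ (p + 2) * cmod (W x)) \<in> borel_measurable borel"
      by (intro borel_measurable_nn_convolution; measurable)+
    have "(\<integral>\<^sup>+\<xi>. ennreal ((m \<xi> powr (s - 1) * cmod (Bop a b c p U W \<xi>))\<^sup>2) \<partial>lborel)
        \<le> (\<integral>\<^sup>+\<xi>. ennreal K * (2 * (((nn_convolution (\<lambda>x. m x * cmod (U x)) (\<lambda>x. m x powr (s - 1) * cmod (W x))) \<xi>)\<^sup>2 + ((nn_convolution (\<lambda>x. m x powr s * cmod (U x)) (\<lambda>x. m x ^ (p + 2) * cmod (W x))) \<xi>)\<^sup>2)) \<partial>lborel)"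
      using Bop_weighted_square_le_convolution[OF U W _ kernel_le] C
      by (intro nn_integral_mono) (simp add: K_def)
    also have "\<dots> = ennreal K * (2 * ((\<integral>\<^sup>+\<xi>. ((nn_convolution (\<lambda>x. m x * cmod (U x)) (\<lambda>x. m x powr (s - 1) * cmod (W x))) \<xi>)\<^sup>2 \<partial>lborel) + (\<integral>\<^sup>+\<xi>. ((nn_convolution (\<lambda>x. m x powr s * cmod (U x)) (\<lambda>x. m x ^ (p + 2) * cmod (W x))) \<xi>)\<^sup>2 \<partial>lborel)))"
      by (subst nn_integral_cmult, measurable, subst nn_integral_cmult, measurable, subst nn_integral_add, measurable)
    also have "\<dots> \<le> ennreal K * (2 * (ennreal (decay_const (s - 1) * (hnorm c p s U)\<^sup>2 * (hnorm c p (s - 1) W)\<^sup>2)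
        + ennreal (decay_const (s - real p - 3) * (hnorm c p s U)\<^sup>2 * (hnorm c p (s - 1) W)\<^sup>2)))"
      by (intro mult_left_mono add_mono nn_integral_square_Bop_terms_le[OF U W]) auto
    also have "\<dots> = ennreal (2 * K * D * (hnorm c p s U)\<^sup>2 * (hnorm c p (s - 1) W)\<^sup>2)"
      using decay_const_nonneg[of "s - 1"] decay_const_nonneg[of "s - real p - 3"]
      by (simp add: D_def K_def ennreal_mult' algebra_simps)
    finally show ?thesis .
  qed
  then show ?thesis
    using D by (intro exI[of _ "2 * K * D"]) (auto simp: K_def)
qed

lemma Bop_bilinear_bound:
  "\<exists>C\<ge>0. \<forall>U\<in>Hs c p s. \<forall>W\<in>Hs c p (s - 1). Bop a b c p U W \<in> Hs c p (s - 1)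
     \<and> hnorm c p (s - 1) (Bop a b c p U W) \<le> C * hnorm c p s U * hnorm c p (s - 1) W"
proof -
  obtain C where C: "C \<ge> 0" and le: "\<And>U W. U \<in> Hs c p s \<Longrightarrow> W \<in> Hs c p (s - 1) \<Longrightarrow>
      (\<integral>\<^sup>+\<xi>. ennreal ((m \<xi> powr (s - 1) * cmod (Bop a b c p U W \<xi>))\<^sup>2) \<partial>lborel)
        \<le> ennreal (C * (hnorm c p s U)\<^sup>2 * (hnorm c p (s - 1) W)\<^sup>2)"
    using Bop_weighted_nn_integral_le by blast
  have "sqrt (C * (hnorm c p s U)\<^sup>2 * (hnorm c p (s - 1) W)\<^sup>2) = sqrt C * hnorm c p s U * hnorm c p (s - 1) W"
    for U W by (simp add: real_sqrt_mult hnorm_nonneg)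
  then show ?thesis
    using Hs_of_nn_integral_le[OF Bop_measurable Bop_hermitian _ le] C
    by (intro exI[of _ "sqrt C"]) auto
qed

lemma Bop_add_right:
  assumes U: "U \<in> Hs c p s" and W1: "W1 \<in> Hs c p (s - 1)" and W2: "W2 \<in> Hs c p (s - 1)"
  shows "Bop a b c p U (\<lambda>\<xi>. W1 \<xi> + W2 \<xi>) = (\<lambda>\<xi>. Bop a b c p U W1 \<xi> + Bop a b c p U W2 \<xi>)"
proof
  fix \<xi>
  have "(LINT \<eta>|lborel. U (\<xi> - \<eta>) * (W1 \<eta> + W2 \<eta>) * Bkernel \<xi> \<eta>)
      = (LINT \<eta>|lborel. U (\<xi> - \<eta>) * W1 \<eta> * Bkernel \<xi> \<eta> + U (\<xi> - \<eta>) * W2 \<eta> * Bkernel \<xi> \<eta>)"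
    by (simp add: algebra_simps)
  also have "\<dots> = (LINT \<eta>|lborel. U (\<xi> - \<eta>) * W1 \<eta> * Bkernel \<xi> \<eta>)
      + (LINT \<eta>|lborel. U (\<xi> - \<eta>) * W2 \<eta> * Bkernel \<xi> \<eta>)"
    by (rule Bochner_Integration.integral_add[OF Bop_convolution(1)[OF U W1] Bop_convolution(1)[OF U W2]])
  finally show "Bop a b c p U (\<lambda>\<xi>. W1 \<xi> + W2 \<xi>) \<xi> = Bop a b c p U W1 \<xi> + Bop a b c p U W2 \<xi>"
    unfolding Bop_convolution(2)[OF U Hs_add[OF W1 W2]] Bop_convolution(2)[OF U W1] Bop_convolution(2)[OF U W2]
    by (simp add: algebra_simps)
qed

lemma Bop_scaleR_right:
  assumes U: "U \<in> Hs c p s" and W: "W \<in> Hs c p (s - 1)"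
  shows "Bop a b c p U (\<lambda>\<xi>. complex_of_real t * W \<xi>) = (\<lambda>\<xi>. complex_of_real t * Bop a b c p U W \<xi>)"
proof
  fix \<xi>
  have "(LINT \<eta>|lborel. U (\<xi> - \<eta>) * (complex_of_real t * W \<eta>) * Bkernel \<xi> \<eta>)
      = complex_of_real t * (LINT \<eta>|lborel. U (\<xi> - \<eta>) * W \<eta> * Bkernel \<xi> \<eta>)"
    by (simp add: algebra_simps)
  then show "Bop a b c p U (\<lambda>\<xi>. complex_of_real t * W \<xi>) \<xi> = complex_of_real t * Bop a b c p U W \<xi>"
    unfolding Bop_convolution(2)[OF U Hs_scaleR[OF W]] Bop_convolution(2)[OF U W]
    by (simp add: algebra_simps)
qed

lemma Bop_diff_left:
  assumes U: "U \<in> Hs c p s" and V: "V \<in> Hs c p s" and W: "W \<in> Hs c p (s - 1)"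
  shows "(\<lambda>\<xi>. Bop a b c p U W \<xi> - Bop a b c p V W \<xi>) = Bop a b c p (\<lambda>\<xi>. U \<xi> - V \<xi>) W"
proof
  fix \<xi>
  have "(LINT \<eta>|lborel. (U (\<xi> - \<eta>) - V (\<xi> - \<eta>)) * W \<eta> * Bkernel \<xi> \<eta>)
      = (LINT \<eta>|lborel. U (\<xi> - \<eta>) * W \<eta> * Bkernel \<xi> \<eta> - V (\<xi> - \<eta>) * W \<eta> * Bkernel \<xi> \<eta>)"
    by (simp add: algebra_simps)
  also have "\<dots> = (LINT \<eta>|lborel. U (\<xi> - \<eta>) * W \<eta> * Bkernel \<xi> \<eta>)
      - (LINT \<eta>|lborel. V (\<xi> - \<eta>) * W \<eta> * Bkernel \<xi> \<eta>)"
    by (rule Bochner_Integration.integral_diff[OF Bop_convolution(1)[OF U W] Bop_convolution(1)[OF V W]])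
  finally have diff: "(LINT \<eta>|lborel. (U (\<xi> - \<eta>) - V (\<xi> - \<eta>)) * W \<eta> * Bkernel \<xi> \<eta>)
      = (LINT \<eta>|lborel. U (\<xi> - \<eta>) * W \<eta> * Bkernel \<xi> \<eta>)
        - (LINT \<eta>|lborel. V (\<xi> - \<eta>) * W \<eta> * Bkernel \<xi> \<eta>)" .
  show "Bop a b c p U W \<xi> - Bop a b c p V W \<xi> = Bop a b c p (\<lambda>\<xi>. U \<xi> - V \<xi>) W \<xi>"
    unfolding Bop_convolution(2)[OF Hs_diff[OF U V] W] Bop_convolution(2)[OF U W] Bop_convolution(2)[OF V W] diff
    by (rule right_diff_distrib[symmetric])
qed

end

theorem lemma2p8:
  fixes a b s :: real and p :: nat and c :: "nat \<Rightarrow> real"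
  assumes "a > 0" and "b > 0"
    and "even p" and "c p \<noteq> 0"
    and "\<forall>\<xi>. Lsym c p \<xi> \<in> \<real> \<and> 0 \<le> Re (Lsym c p \<xi>)"
    and "s > 7/2 + real p"
  shows "(\<forall>U \<in> Hs c p s.
            (\<forall>W \<in> Hs c p (s - 1). Bop a b c p U W \<in> Hs c p (s - 1))
          \<and> (\<forall>W1 \<in> Hs c p (s - 1). \<forall>W2 \<in> Hs c p (s - 1).
               Bop a b c p U (\<lambda>\<xi>. W1 \<xi> + W2 \<xi>) = (\<lambda>\<xi>. Bop a b c p U W1 \<xi> + Bop a b c p U W2 \<xi>))
          \<and> (\<forall>t::real. \<forall>W \<in> Hs c p (s - 1).
               Bop a b c p U (\<lambda>\<xi>. complex_of_real t * W \<xi>) = (\<lambda>\<xi>. complex_of_real t * Bop a b c p U W \<xi>))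
          \<and> (\<exists>C. \<forall>W \<in> Hs c p (s - 1). hnorm c p (s - 1) (Bop a b c p U W) \<le> C * hnorm c p (s - 1) W))
    \<and> (\<forall>r > 0. \<exists>C. \<forall>U \<in> Hs c p s. hnorm c p s U \<le> r \<longrightarrow>
          (\<forall>W \<in> Hs c p (s - 1). hnorm c p (s - 1) (Bop a b c p U W) \<le> C * hnorm c p (s - 1) W))
    \<and> (\<forall>r > 0. \<exists>lam2. \<forall>U \<in> Hs c p s. \<forall>V \<in> Hs c p s.
          hnorm c p s U \<le> r \<longrightarrow> hnorm c p s V \<le> r \<longrightarrow>
          (\<forall>W \<in> Hs c p (s - 1).
             hnorm c p (s - 1) (\<lambda>\<xi>. Bop a b c p U W \<xi> - Bop a b c p V W \<xi>)
               \<le> lam2 * hnorm c p s (\<lambda>\<xi>. U \<xi> - V \<xi>) * hnorm c p (s - 1) W))"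
proof -
  interpret commutator_setting c p a b s
    by unfold_locales (use assms in auto)
  obtain C where C: "C \<ge> 0"
    and Bop_Hs: "\<And>U W. U \<in> Hs c p s \<Longrightarrow> W \<in> Hs c p (s - 1) \<Longrightarrow> Bop a b c p U W \<in> Hs c p (s - 1)"
    and Bop_le: "\<And>U W. U \<in> Hs c p s \<Longrightarrow> W \<in> Hs c p (s - 1) \<Longrightarrow>
      hnorm c p (s - 1) (Bop a b c p U W) \<le> C * hnorm c p s U * hnorm c p (s - 1) W"
    using Bop_bilinear_bound by blast
  have bounded: "hnorm c p (s - 1) (Bop a b c p U W) \<le> C * r * hnorm c p (s - 1) W"
    if "U \<in> Hs c p s" "hnorm c p s U \<le> r" "W \<in> Hs c p (s - 1)" for U W r
    using order_trans[OF Bop_le[OF that(1,3)]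
        mult_right_mono[OF mult_left_mono[OF that(2) C] hnorm_nonneg[of "s - 1" W]]] .
  have lipschitz: "hnorm c p (s - 1) (\<lambda>\<xi>. Bop a b c p U W \<xi> - Bop a b c p V W \<xi>)
      \<le> C * hnorm c p s (\<lambda>\<xi>. U \<xi> - V \<xi>) * hnorm c p (s - 1) W"
    if "U \<in> Hs c p s" "V \<in> Hs c p s" "W \<in> Hs c p (s - 1)" for U V W
    unfolding Bop_diff_left[OF that] using Bop_le[OF Hs_diff[OF that(1,2)] that(3)] .
  show ?thesis
    using Bop_Hs Bop_add_right Bop_scaleR_right bounded[OF _ order_refl] bounded lipschitz
    by blast
qed

end
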